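(* Let $\Gamma\subset\mathbf{C}^4$ (coordinates $(z=(z_1,z_2),\zeta,w=u+iv)$) be given by $$v=\langle z,\bar z\rangle+F_3(z,\bar z,\zeta,\bar\zeta)+F_4(z,\bar z,\zeta,\bar\zeta)+\dots,$$ where $F_j$ is a real homogeneous polynomial of degree $j$, $\langle z,\bar z\rangle$ is a nondegenerate Hermitian form, and $$F_3=2\mathrm{Re}\big(K(z,z)\bar\zeta+A_1(z)|\zeta|^2+A_2\zeta^2\bar\zeta\big),$$ $$F_4=2\mathrm{Re}\big((P(z,z,\bar z)+Q(z,z,z))\bar\zeta+R(z,z)\bar\zeta^2\big)+S(z,\bar z)|\zeta|^2+T(z,z,\bar z,\bar z)+2\mathrm{Re}\big(B_1(z,z)|\zeta|^2+B_2(z)\zeta^2\bar\zeta+B_3(z)\zeta\bar\zeta^2\big),$$ with $K\not\equiv 0$, and assume the pair $(\langle z,\bar z\rangle,K)$ is one of the nine normal forms (1)–(9) listed below. If the Levi form of $\Gamma$ is identically degenerate (equivalently, the determinant of the complex Hessian of the right-hand side with respect to $(z_1,z_2,\zeta)$ vanishes identically), then $A_1=A_2=B_1=B_2=B_3=0$ and, according to the number of the pair, (1) $S=4(k^2|z_1|^2+m^2|z_2|^2)$; (2) $S=4k^2(|z_1|^2+|z_2|^2)$; (3) $S=4k^2|z_1|^2$; (4) $S=4(k^2|z_1|^2-m^2|z_2|^2)$; (5) $S=4k^2(|z_1|^2-|z_2|^2)$; (6) $S=4k^2|z_1|^2$; (7) $S=4(\bar m z_1\bar z_2+mz_2\bar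 z_1)$; (8) $S=4m(z_1\bar z_2+z_2\bar z_1)$; (9) $S=0$.
   Context: Here $A_1$ is a complex linear form in $z$, $A_2$ a complex constant, $K,R,B_1$ holomorphic quadratic forms in $z$, $B_2,B_3$ linear forms, $P(z,z,\bar z)$ of bidegree $(2,1)$, $Q$ a holomorphic cubic form, $S$ a Hermitian form, $T$ of bidegree $(2,2)$. The nine normal forms of the pair $(\langle z,\bar z\rangle,K(z,z))$ are: (1) $(|z_1|^2+|z_2|^2,kz_1^2+mz_2^2)$, $k,m>0,k\ne m$; (2) $(|z_1|^2+|z_2|^2,k(z_1^2+z_2^2))$, $k>0$; (3) $(|z_1|^2+|z_2|^2,kz_1^2)$, $k>0$; (4) $(|z_1|^2-|z_2|^2,kz_1^2+mz_2^2)$, $k,m>0,k\ne m$; (5) $(|z_1|^2-|z_2|^2,k(z_1^2+z_2^2))$, $k>0$; (6) $(|z_1|^2-|z_2|^2,kz_1^2)$, $k>0$; (7) $(2\mathrm{Re}(z_1\bar z_2),z_1^2+mz_2^2)$, $m\notin\mathbf{R}$; (8) $(2\mathrm{Re}(z_1\bar z_2),z_1^2+mz_2^2)$, $m\in\mathbf{R}\setminus\{0\}$; (9) $(2\mathrm{Re}(z_1\bar z_2),z_1^2)$. *)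

theory Defs
  imports "HOL-Analysis.Analysis"
begin

text \<open>Points of C^3 with coordinates (z1, z2, zeta).\<close>
type_synonym pt = "complex \<times> complex \<times> complex"

definition Dd :: "pt \<Rightarrow> (pt \<Rightarrow> complex) \<Rightarrow> pt \<Rightarrow> complex" where
  "Dd v g = (\<lambda>p. vector_derivative (\<lambda>t::real. g (p + t *\<^sub>R v)) (at 0))"

definition C_inf_on :: "pt set \<Rightarrow> (pt \<Rightarrow> complex) \<Rightarrow> bool" where
  "C_inf_on U g \<longleftrightarrow>
     (\<forall>vs. continuous_on U (foldr Dd vs g) \<and>
        (\<forall>v. \<forall>p\<in>U. (\<lambda>t::real. foldr Dd vs g (p + t *\<^sub>R v)) differentiable (at 0)))"

text \<open>Coordinate unit vectors e_j and i*e_j (j = 0,1,2 for z1, z2, zeta).\<close>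
definition ev :: "nat \<Rightarrow> complex \<Rightarrow> pt" where
  "ev j c = (if j = 0 then (c, 0, 0) else if j = 1 then (0, c, 0) else (0, 0, c))"

definition dZ :: "nat \<Rightarrow> (pt \<Rightarrow> complex) \<Rightarrow> pt \<Rightarrow> complex" where
  "dZ j g = (\<lambda>p. (Dd (ev j 1) g p - \<i> * Dd (ev j \<i>) g p) / 2)"

definition dZb :: "nat \<Rightarrow> (pt \<Rightarrow> complex) \<Rightarrow> pt \<Rightarrow> complex" where
  "dZb j g = (\<lambda>p. (Dd (ev j 1) g p + \<i> * Dd (ev j \<i>) g p) / 2)"

definition cHess :: "(pt \<Rightarrow> real) \<Rightarrow> pt \<Rightarrow> nat \<Rightarrow> nat \<Rightarrow> complex" where
  "cHess f p j k = dZ j (dZb k (\<lambda>q. complex_of_real (f q))) p"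

definition det3 :: "(nat \<Rightarrow> nat \<Rightarrow> complex) \<Rightarrow> complex" where
  "det3 H = H 0 0 * (H 1 1 * H 2 2 - H 1 2 * H 2 1)
          - H 0 1 * (H 1 0 * H 2 2 - H 1 2 * H 2 0)
          + H 0 2 * (H 1 0 * H 2 1 - H 1 1 * H 2 0)"

definition levi_det :: "(pt \<Rightarrow> real) \<Rightarrow> pt \<Rightarrow> complex" where
  "levi_det f p = det3 (cHess f p)"

definition zv :: "complex \<Rightarrow> complex \<Rightarrow> nat \<Rightarrow> complex" where
  "zv z1 z2 i = (if i = 0 then z1 else z2)"

definition is_linear_form :: "(complex \<Rightarrow> complex \<Rightarrow> complex) \<Rightarrow> bool" where
  "is_linear_form A \<longleftrightarrow> (\<exists>a b. \<forall>z1 z2. A z1 z2 = a * z1 + b * z2)"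

definition is_quadratic_form :: "(complex \<Rightarrow> complex \<Rightarrow> complex) \<Rightarrow> bool" where
  "is_quadratic_form Q \<longleftrightarrow> (\<exists>a b c. \<forall>z1 z2. Q z1 z2 = a * z1^2 + b * z1 * z2 + c * z2^2)"

definition is_cubic_form :: "(complex \<Rightarrow> complex \<Rightarrow> complex) \<Rightarrow> bool" where
  "is_cubic_form Q \<longleftrightarrow> (\<exists>a b c d. \<forall>z1 z2.
      Q z1 z2 = a * z1^3 + b * z1^2 * z2 + c * z1 * z2^2 + d * z2^3)"

definition is_bideg21 :: "(complex \<Rightarrow> complex \<Rightarrow> complex) \<Rightarrow> bool" where
  "is_bideg21 P \<longleftrightarrow> (\<exists>c :: nat \<Rightarrow> nat \<Rightarrow> nat \<Rightarrow> complex. \<forall>z1 z2.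
      P z1 z2 = (\<Sum>i<2. \<Sum>j<2. \<Sum>l<2. c i j l * zv z1 z2 i * zv z1 z2 j * cnj (zv z1 z2 l)))"

definition is_bideg22 :: "(complex \<Rightarrow> complex \<Rightarrow> complex) \<Rightarrow> bool" where
  "is_bideg22 T \<longleftrightarrow> (\<exists>c :: nat \<Rightarrow> nat \<Rightarrow> nat \<Rightarrow> nat \<Rightarrow> complex. \<forall>z1 z2.
      T z1 z2 = (\<Sum>i<2. \<Sum>j<2. \<Sum>l<2. \<Sum>r<2.
                   c i j l r * zv z1 z2 i * zv z1 z2 j * cnj (zv z1 z2 l) * cnj (zv z1 z2 r)))"

definition is_hermitian_form :: "(complex \<Rightarrow> complex \<Rightarrow> complex) \<Rightarrow> bool" where
  "is_hermitian_form S \<longleftrightarrow> (\<exists>c :: nat \<Rightarrow> nat \<Rightarrow> complex. (\<forall>i j. c j i = cnj (c i j)) \<and>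
      (\<forall>z1 z2. S z1 z2 = (\<Sum>i<2. \<Sum>j<2. c i j * zv z1 z2 i * cnj (zv z1 z2 j))))"

definition nf_herm :: "nat \<Rightarrow> complex \<Rightarrow> complex \<Rightarrow> real" where
  "nf_herm n z1 z2 =
     (if n \<in> {1,2,3} then (cmod z1)^2 + (cmod z2)^2
      else if n \<in> {4,5,6} then (cmod z1)^2 - (cmod z2)^2
      else 2 * Re (z1 * cnj z2))"

definition nf_K :: "nat \<Rightarrow> real \<Rightarrow> complex \<Rightarrow> complex \<Rightarrow> complex \<Rightarrow> complex" where
  "nf_K n k m z1 z2 =
     (if n \<in> {1,4} then of_real k * z1^2 + m * z2^2
      else if n \<in> {2,5} then of_real k * (z1^2 + z2^2)
      else if n \<in> {3,6} then of_real k * z1^2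
      else if n \<in> {7,8} then z1^2 + m * z2^2
      else z1^2)"

definition nf_params :: "nat \<Rightarrow> real \<Rightarrow> complex \<Rightarrow> bool" where
  "nf_params n k m =
     (if n \<in> {1,4} then k > 0 \<and> m \<in> \<real> \<and> Re m > 0 \<and> of_real k \<noteq> m
      else if n \<in> {2,3,5,6} then k > 0
      else if n = 7 then m \<notin> \<real>
      else if n = 8 then m \<in> \<real> \<and> m \<noteq> 0
      else n = 9)"

definition nf_S :: "nat \<Rightarrow> real \<Rightarrow> complex \<Rightarrow> complex \<Rightarrow> complex \<Rightarrow> complex" where
  "nf_S n k m z1 z2 =
     (if n = 1 then 4 * (of_real (k^2) * of_real ((cmod z1)^2) + m^2 * of_real ((cmod z2)^2))
      else if n = 2 then 4 * of_real (k^2) * of_real ((cmod z1)^2 + (cmod z2)^2)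
      else if n = 3 then 4 * of_real (k^2) * of_real ((cmod z1)^2)
      else if n = 4 then 4 * (of_real (k^2) * of_real ((cmod z1)^2) - m^2 * of_real ((cmod z2)^2))
      else if n = 5 then 4 * of_real (k^2) * of_real ((cmod z1)^2 - (cmod z2)^2)
      else if n = 6 then 4 * of_real (k^2) * of_real ((cmod z1)^2)
      else if n = 7 then 4 * (cnj m * z1 * cnj z2 + m * z2 * cnj z1)
      else if n = 8 then 4 * m * (z1 * cnj z2 + z2 * cnj z1)
      else 0)"

end

theory Submission
  imports Defs
begin

text \<open>Restrict the defining function to the ray through a fixed point \<open>p\<close>. The complex Hessian of
  a homogeneous polynomial of degree \<open>d\<close> is homogeneous of degree \<open>d - 2\<close>, and the complex Hessian of a
  smooth remainder that is \<open>O(|p|\<^sup>5)\<close> is \<open>O(|p|\<^sup>3)\<close> (first derivatives are controlled by a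
  five-point difference quotient and Taylor's formula). Hence the Levi matrix at \<open>t p\<close> is
  \<open>H + t N + t\<^sup>2 L + O(t\<^sup>3)\<close>, where \<open>H\<close> comes from the Hermitian form (nondegenerate in \<open>z\<close>, zero in
  the \<open>\<zeta>\<close>-directions) and \<open>N\<close>, \<open>L\<close> are the Hessians of \<open>F\<^sub>3\<close>, \<open>F\<^sub>4\<close> at \<open>p\<close>. Since the Levi
  determinant vanishes identically, so do the coefficients of \<open>t\<close> and \<open>t\<^sup>2\<close> in \<open>det (H + t N + t\<^sup>2 L)\<close>.
  The first is \<open>det H\<close> times the \<open>\<zeta>\<zeta>\<close>-entry \<open>2 Re A\<^sub>1(z) + 4 Re (A\<^sub>2 \<zeta>)\<close> of \<open>N\<close>, which forces
  \<open>A\<^sub>1 = A\<^sub>2 = 0\<close>. The second expresses \<open>det H\<close> times the \<open>\<zeta>\<zeta>\<close>-entry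
  \<open>S(z) + 2 Re B\<^sub>1(z) + 4 Re ((B\<^sub>2(z) + cnj B\<^sub>3(z)) \<zeta>)\<close> of \<open>L\<close> through cofactors of \<open>H\<close> and the
  gradient of \<open>K\<close>; this depends on \<open>z\<close> alone and is invariant under \<open>z \<mapsto> i z\<close>, which kills the
  \<open>\<zeta>\<close>-terms and \<open>Re B\<^sub>1\<close> and leaves \<open>S\<close> as a cofactor expression, evaluated for each normal form.\<close>

section \<open>Directional and Wirtinger derivatives\<close>

definition line_differentiable :: "(pt \<Rightarrow> complex) \<Rightarrow> pt \<Rightarrow> pt \<Rightarrow> bool" where
  "line_differentiable g q v \<longleftrightarrow> (\<lambda>t::real. g (q + t *\<^sub>R v)) differentiable (at 0)"

lemma line_differentiableI:
  "((\<lambda>t::real. g (q + t *\<^sub>R v)) has_vector_derivative D) (at 0) \<Longrightarrow> line_differentiable g q v"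
  unfolding line_differentiable_def by (rule differentiableI_vector)

lemma Dd_has_vector_derivative:
  "line_differentiable g q v \<Longrightarrow> ((\<lambda>t::real. g (q + t *\<^sub>R v)) has_vector_derivative Dd v g q) (at 0)"
  unfolding line_differentiable_def Dd_def using vector_derivative_works by blast

lemma Dd_eqI:
  "((\<lambda>t::real. g (q + t *\<^sub>R v)) has_vector_derivative D) (at 0) \<Longrightarrow> Dd v g q = D"
  unfolding Dd_def by (rule vector_derivative_at)

lemma line_differentiable_add:
  "line_differentiable f q v \<Longrightarrow> line_differentiable g q v \<Longrightarrow> line_differentiable (\<lambda>p. f p + g p) q v"
  by (rule line_differentiableI, rule has_vector_derivative_add, (erule Dd_has_vector_derivative)+)

lemma Dd_add_at:
  "line_differentiable f q v \<Longrightarrow> line_differentiable g q v \<Longrightarrow> Dd v (\<lambda>p. f p + g p) q = Dd v f q + Dd v g q"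
  by (rule Dd_eqI, rule has_vector_derivative_add, (erule Dd_has_vector_derivative)+)

lemma Dd_diff_at:
  "line_differentiable f q v \<Longrightarrow> line_differentiable g q v \<Longrightarrow> Dd v (\<lambda>p. f p - g p) q = Dd v f q - Dd v g q"
  by (rule Dd_eqI, rule has_vector_derivative_diff, (erule Dd_has_vector_derivative)+)

lemma line_differentiable_cmult:
  "line_differentiable f q v \<Longrightarrow> line_differentiable (\<lambda>p. c * f p) q v"
  by (rule line_differentiableI, rule has_vector_derivative_mult_right, erule Dd_has_vector_derivative)

lemma Dd_cmult_at: "line_differentiable f q v \<Longrightarrow> Dd v (\<lambda>p. c * f p) q = c * Dd v f q"
  by (rule Dd_eqI, rule has_vector_derivative_mult_right, erule Dd_has_vector_derivative)

lemma line_differentiable_divide: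
  "line_differentiable f q v \<Longrightarrow> line_differentiable (\<lambda>p. f p / c) q v"
  by (rule line_differentiableI, rule has_vector_derivative_divide, erule Dd_has_vector_derivative)

lemma Dd_divide_at: "line_differentiable f q v \<Longrightarrow> Dd v (\<lambda>p. f p / c) q = Dd v f q / c"
  by (rule Dd_eqI, rule has_vector_derivative_divide, erule Dd_has_vector_derivative)

lemma Dd_local:
  assumes "open V" "q \<in> V" "\<And>p. p \<in> V \<Longrightarrow> f p = g p"
  shows "Dd v f q = Dd v g q"
proof -
  have "open ((\<lambda>t::real. q + t *\<^sub>R v) -` V)"
    by (rule open_vimage[OF assms(1)]) (intro continuous_intros)
  moreover have "0 \<in> (\<lambda>t::real. q + t *\<^sub>R v) -` V" using assms(2) by simp
  ultimately obtain e where e: "e > 0" "ball 0 e \<subseteq> (\<lambda>t::real. q + t *\<^sub>R v) -` V"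
    by (meson open_contains_ball)
  have "\<forall>\<^sub>F t in nhds 0. f (q + t *\<^sub>R v) = g (q + t *\<^sub>R v)"
    unfolding eventually_nhds_metric using e assms(3)
    by (intro exI[of _ e]) (auto simp: dist_norm subset_iff)
  then show ?thesis unfolding Dd_def by (intro vector_derivative_cong_eq) auto
qed

lemma dZ_add_at:
  assumes "line_differentiable A q (ev j 1)" "line_differentiable A q (ev j \<i>)"
    and "line_differentiable B q (ev j 1)" "line_differentiable B q (ev j \<i>)"
  shows "dZ j (\<lambda>p. A p + B p) q = dZ j A q + dZ j B q"
  unfolding dZ_def using assms by (simp add: Dd_add_at field_simps)

lemma dZb_add_at:
  assumes "line_differentiable A q (ev j 1)" "line_differentiable A q (ev j \<i>)"
    and "line_differentiable B q (ev j 1)" "line_differentiable B q (ev j \<i>)"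
  shows "dZb j (\<lambda>p. A p + B p) q = dZb j A q + dZb j B q"
  unfolding dZb_def using assms by (simp add: Dd_add_at field_simps)

lemma dZ_dZb_eq_Dd:
  assumes "line_differentiable (Dd (ev k 1) g) q (ev j 1)" "line_differentiable (Dd (ev k 1) g) q (ev j \<i>)"
    and "line_differentiable (Dd (ev k \<i>) g) q (ev j 1)" "line_differentiable (Dd (ev k \<i>) g) q (ev j \<i>)"
  shows "dZ j (dZb k g) q = (Dd (ev j 1) (Dd (ev k 1) g) q + \<i> * Dd (ev j 1) (Dd (ev k \<i>) g) q
      - \<i> * Dd (ev j \<i>) (Dd (ev k 1) g) q + Dd (ev j \<i>) (Dd (ev k \<i>) g) q) / 4"
proof -
  have Dd_dZb: "Dd v (dZb k g) q = (Dd v (Dd (ev k 1) g) q + \<i> * Dd v (Dd (ev k \<i>) g) q) / 2"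
    if a: "line_differentiable (Dd (ev k 1) g) q v" "line_differentiable (Dd (ev k \<i>) g) q v" for v
  proof -
    have "Dd v (dZb k g) q = Dd v (\<lambda>p. Dd (ev k 1) g p + \<i> * Dd (ev k \<i>) g p) q / 2"
      unfolding dZb_def
      by (rule Dd_divide_at, intro line_differentiable_add line_differentiable_cmult a)
    also have "\<dots> = (Dd v (Dd (ev k 1) g) q + \<i> * Dd v (Dd (ev k \<i>) g) q) / 2"
      using a by (simp add: Dd_add_at Dd_cmult_at line_differentiable_cmult)
    finally show ?thesis .
  qed
  show ?thesis unfolding dZ_def Dd_dZb[OF assms(1,3)] Dd_dZb[OF assms(2,4)]
    by (simp add: field_simps)
qed

section \<open>Polynomials in the coordinates and their conjugates\<close>

inductive poly_z_zbar :: "(pt \<Rightarrow> complex) \<Rightarrow> bool" where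
  const: "poly_z_zbar (\<lambda>q. c)"
| z1: "poly_z_zbar fst"
| z2: "poly_z_zbar (\<lambda>q. fst (snd q))"
| zeta: "poly_z_zbar (\<lambda>q. snd (snd q))"
| add: "poly_z_zbar f \<Longrightarrow> poly_z_zbar g \<Longrightarrow> poly_z_zbar (\<lambda>q. f q + g q)"
| diff: "poly_z_zbar f \<Longrightarrow> poly_z_zbar g \<Longrightarrow> poly_z_zbar (\<lambda>q. f q - g q)"
| mult: "poly_z_zbar f \<Longrightarrow> poly_z_zbar g \<Longrightarrow> poly_z_zbar (\<lambda>q. f q * g q)"
| cnj: "poly_z_zbar f \<Longrightarrow> poly_z_zbar (\<lambda>q. cnj (f q))"
| divide: "poly_z_zbar f \<Longrightarrow> poly_z_zbar (\<lambda>q. f q / c)"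

lemma affine_line_has_vector_derivative: "((\<lambda>t::real. a + t *\<^sub>R b) has_vector_derivative b) (at x)"
  by (rule has_vector_derivative_add[of "\<lambda>t. a" 0 _ "\<lambda>t. t *\<^sub>R b" b, simplified])
     (auto intro!: derivative_eq_intros simp: has_vector_derivative_def)

lemma poly_z_zbar_line_derivative:
  "poly_z_zbar f \<Longrightarrow>
    \<exists>f'. poly_z_zbar f' \<and> (\<forall>q. ((\<lambda>t::real. f (q + t *\<^sub>R v)) has_vector_derivative f' q) (at 0))"
proof (induction rule: poly_z_zbar.induct)
  case (const c)
  show ?case by (intro exI[of _ "\<lambda>q. 0"]) (auto intro: poly_z_zbar.intros)
next
  case z1
  show ?case by (intro exI[of _ "\<lambda>q. fst v"])
      (auto intro: poly_z_zbar.intros simp: affine_line_has_vector_derivative)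
next
  case z2
  show ?case by (intro exI[of _ "\<lambda>q. fst (snd v)"])
      (auto intro: poly_z_zbar.intros simp: affine_line_has_vector_derivative)
next
  case zeta
  show ?case by (intro exI[of _ "\<lambda>q. snd (snd v)"])
      (auto intro: poly_z_zbar.intros simp: affine_line_has_vector_derivative)
next
  case (add f g)
  then obtain f' g' where "poly_z_zbar f'" "poly_z_zbar g'"
    "\<forall>q. ((\<lambda>t::real. f (q + t *\<^sub>R v)) has_vector_derivative f' q) (at 0)"
    "\<forall>q. ((\<lambda>t::real. g (q + t *\<^sub>R v)) has_vector_derivative g' q) (at 0)" by blast
  then show ?case
    by (intro exI[of _ "\<lambda>q. f' q + g' q"]) (auto intro: poly_z_zbar.intros has_vector_derivative_add)
next
  case (diff f g)
  then obtain f' g' where "poly_z_zbar f'" "poly_z_zbar g'"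
    "\<forall>q. ((\<lambda>t::real. f (q + t *\<^sub>R v)) has_vector_derivative f' q) (at 0)"
    "\<forall>q. ((\<lambda>t::real. g (q + t *\<^sub>R v)) has_vector_derivative g' q) (at 0)" by blast
  then show ?case
    by (intro exI[of _ "\<lambda>q. f' q - g' q"]) (auto intro: poly_z_zbar.intros has_vector_derivative_diff)
next
  case (mult f g)
  then obtain f' g' where p: "poly_z_zbar f'" "poly_z_zbar g'"
    and f': "\<And>q. ((\<lambda>t::real. f (q + t *\<^sub>R v)) has_vector_derivative f' q) (at 0)"
    and g': "\<And>q. ((\<lambda>t::real. g (q + t *\<^sub>R v)) has_vector_derivative g' q) (at 0)" by blast
  have "((\<lambda>t::real. f (q + t *\<^sub>R v) * g (q + t *\<^sub>R v)) has_vector_derivative f q * g' q + f' q * g q) (at 0)"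
    for q using has_vector_derivative_mult[OF f' g'] by simp
  moreover have "poly_z_zbar (\<lambda>q. f q * g' q + f' q * g q)"
    using mult.hyps p by (intro poly_z_zbar.intros)
  ultimately show ?case by blast
next
  case (cnj f)
  then obtain f' where "poly_z_zbar f'"
    "\<forall>q. ((\<lambda>t::real. f (q + t *\<^sub>R v)) has_vector_derivative f' q) (at 0)" by blast
  then show ?case
    by (intro exI[of _ "\<lambda>q. cnj (f' q)"]) (auto intro: poly_z_zbar.intros has_vector_derivative_cnj)
next
  case (divide f c)
  then obtain f' where "poly_z_zbar f'"
    "\<forall>q. ((\<lambda>t::real. f (q + t *\<^sub>R v)) has_vector_derivative f' q) (at 0)" by blast
  then show ?case
    by (intro exI[of _ "\<lambda>q. f' q / c"]) (auto intro: poly_z_zbar.intros has_vector_derivative_divide)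
qed

lemma poly_z_zbar_line_differentiable: "poly_z_zbar f \<Longrightarrow> line_differentiable f q v"
  using poly_z_zbar_line_derivative[of f v] line_differentiableI by blast

lemma poly_z_zbar_Dd: "poly_z_zbar f \<Longrightarrow> poly_z_zbar (Dd v f)"
proof -
  assume "poly_z_zbar f"
  then obtain f' where "poly_z_zbar f'"
    and "\<forall>q. ((\<lambda>t::real. f (q + t *\<^sub>R v)) has_vector_derivative f' q) (at 0)"
    using poly_z_zbar_line_derivative by blast
  moreover from this(2) have "Dd v f = f'" using Dd_eqI by blast
  ultimately show ?thesis by simp
qed

lemma poly_z_zbar_dZb: "poly_z_zbar g \<Longrightarrow> poly_z_zbar (dZb k g)"
  unfolding dZb_def by (intro poly_z_zbar.intros poly_z_zbar_Dd)

lemma Dd_const [simp]: "Dd v (\<lambda>q. c) = (\<lambda>q. 0)"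
  by (rule ext, rule Dd_eqI) simp

lemma Dd_fst [simp]: "Dd v fst = (\<lambda>q. fst v)"
  by (rule ext, rule Dd_eqI) (simp add: affine_line_has_vector_derivative)

lemma Dd_fst_snd [simp]: "Dd v (\<lambda>q. fst (snd q)) = (\<lambda>q. fst (snd v))"
  by (rule ext, rule Dd_eqI) (simp add: affine_line_has_vector_derivative)

lemma Dd_snd_snd [simp]: "Dd v (\<lambda>q. snd (snd q)) = (\<lambda>q. snd (snd v))"
  by (rule ext, rule Dd_eqI) (simp add: affine_line_has_vector_derivative)

lemma Dd_add [simp]:
  "poly_z_zbar f \<Longrightarrow> poly_z_zbar g \<Longrightarrow> Dd v (\<lambda>q. f q + g q) = (\<lambda>q. Dd v f q + Dd v g q)"
  by (rule ext, rule Dd_add_at; rule poly_z_zbar_line_differentiable)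

lemma Dd_diff [simp]:
  "poly_z_zbar f \<Longrightarrow> poly_z_zbar g \<Longrightarrow> Dd v (\<lambda>q. f q - g q) = (\<lambda>q. Dd v f q - Dd v g q)"
  by (rule ext, rule Dd_diff_at; rule poly_z_zbar_line_differentiable)

lemma Dd_mult [simp]:
  assumes "poly_z_zbar f" "poly_z_zbar g"
  shows "Dd v (\<lambda>q. f q * g q) = (\<lambda>q. f q * Dd v g q + Dd v f q * g q)"
proof (rule ext, rule Dd_eqI)
  fix q
  from has_vector_derivative_mult[OF Dd_has_vector_derivative Dd_has_vector_derivative,
      OF poly_z_zbar_line_differentiable[OF assms(1)] poly_z_zbar_line_differentiable[OF assms(2)]]
  show "((\<lambda>t::real. f (q + t *\<^sub>R v) * g (q + t *\<^sub>R v))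
      has_vector_derivative f q * Dd v g q + Dd v f q * g q) (at 0)"
    by simp
qed

lemma Dd_cnj [simp]: "poly_z_zbar f \<Longrightarrow> Dd v (\<lambda>q. cnj (f q)) = (\<lambda>q. cnj (Dd v f q))"
  by (rule ext, rule Dd_eqI, rule has_vector_derivative_cnj, rule Dd_has_vector_derivative,
      rule poly_z_zbar_line_differentiable)

lemma Dd_divide [simp]: "poly_z_zbar f \<Longrightarrow> Dd v (\<lambda>q. f q / c) = (\<lambda>q. Dd v f q / c)"
  by (rule ext, rule Dd_divide_at, rule poly_z_zbar_line_differentiable)

lemma dZ_dZb_poly_z_zbar:
  "poly_z_zbar g \<Longrightarrow> dZ j (dZb k g) q = (Dd (ev j 1) (Dd (ev k 1) g) q + \<i> * Dd (ev j 1) (Dd (ev k \<i>) g) q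
      - \<i> * Dd (ev j \<i>) (Dd (ev k 1) g) q + Dd (ev j \<i>) (Dd (ev k \<i>) g) q) / 4"
  by (rule dZ_dZb_eq_Dd; rule poly_z_zbar_line_differentiable; rule poly_z_zbar_Dd)

lemma dZ_dZb_add:
  assumes "poly_z_zbar a" "poly_z_zbar b"
  shows "dZ j (dZb k (\<lambda>q. a q + b q)) q = dZ j (dZb k a) q + dZ j (dZb k b) q"
proof -
  have "dZb k (\<lambda>q. a q + b q) = (\<lambda>p. dZb k a p + dZb k b p)"
    using assms by (intro ext dZb_add_at poly_z_zbar_line_differentiable)
  then show ?thesis
    using assms by (simp add: dZ_add_at poly_z_zbar_line_differentiable poly_z_zbar_dZb)
qed

lemma poly_z_zbar_sum:
  "finite A \<Longrightarrow> (\<And>i. i \<in> A \<Longrightarrow> poly_z_zbar (g i)) \<Longrightarrow> poly_z_zbar (\<lambda>q. \<Sum>i\<in>A. g i q)"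
proof (induction A rule: finite_induct)
  case empty
  then show ?case using poly_z_zbar.const[of 0] by simp
next
  case (insert x F)
  then show ?case by (simp add: poly_z_zbar.add)
qed

lemma poly_z_zbar_power: "poly_z_zbar f \<Longrightarrow> poly_z_zbar (\<lambda>q. f q ^ n)"
  by (induction n) (auto intro: poly_z_zbar.intros)

lemma poly_z_zbar_Re: "poly_z_zbar f \<Longrightarrow> poly_z_zbar (\<lambda>q. complex_of_real (2 * Re (f q)))"
  unfolding complex_add_cnj[symmetric] by (intro poly_z_zbar.intros)

lemma poly_z_zbar_norm_square: "poly_z_zbar f \<Longrightarrow> poly_z_zbar (\<lambda>q. complex_of_real (cmod (f q) ^ 2))"
  unfolding complex_norm_square by (intro poly_z_zbar.intros)

lemma poly_z_zbar_zv: "poly_z_zbar (\<lambda>q. zv (fst q) (fst (snd q)) i)"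
  by (cases "i = 0") (auto simp: zv_def intro: poly_z_zbar.intros)

lemma poly_z_zbar_linear_form:
  assumes "is_linear_form A" shows "poly_z_zbar (\<lambda>q. A (fst q) (fst (snd q)))"
proof -
  obtain a b where "\<And>z1 z2. A z1 z2 = a * z1 + b * z2"
    using assms unfolding is_linear_form_def by blast
  then show ?thesis by (simp add: poly_z_zbar.intros)
qed

lemma poly_z_zbar_quadratic_form:
  assumes "is_quadratic_form A" shows "poly_z_zbar (\<lambda>q. A (fst q) (fst (snd q)))"
proof -
  obtain a b c where "\<And>z1 z2. A z1 z2 = a * z1^2 + b * z1 * z2 + c * z2^2"
    using assms unfolding is_quadratic_form_def by blast
  then show ?thesis by (simp add: poly_z_zbar.intros poly_z_zbar_power)
qed

lemma poly_z_zbar_cubic_form: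
  assumes "is_cubic_form A" shows "poly_z_zbar (\<lambda>q. A (fst q) (fst (snd q)))"
proof -
  obtain a b c d where "\<And>z1 z2. A z1 z2 = a * z1^3 + b * z1^2 * z2 + c * z1 * z2^2 + d * z2^3"
    using assms unfolding is_cubic_form_def by blast
  then show ?thesis by (simp add: poly_z_zbar.intros poly_z_zbar_power)
qed

lemma poly_z_zbar_bideg21:
  assumes "is_bideg21 A" shows "poly_z_zbar (\<lambda>q. A (fst q) (fst (snd q)))"
proof -
  obtain c where "\<And>z1 z2. A z1 z2 =
      (\<Sum>i<2. \<Sum>j<2. \<Sum>l<2. c i j l * zv z1 z2 i * zv z1 z2 j * cnj (zv z1 z2 l))"
    using assms unfolding is_bideg21_def by blast
  then show ?thesis by (simp add: poly_z_zbar.intros poly_z_zbar_sum poly_z_zbar_zv)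
qed

lemma poly_z_zbar_bideg22:
  assumes "is_bideg22 A" shows "poly_z_zbar (\<lambda>q. A (fst q) (fst (snd q)))"
proof -
  obtain c where "\<And>z1 z2. A z1 z2 = (\<Sum>i<2. \<Sum>j<2. \<Sum>l<2. \<Sum>r<2.
      c i j l r * zv z1 z2 i * zv z1 z2 j * cnj (zv z1 z2 l) * cnj (zv z1 z2 r))"
    using assms unfolding is_bideg22_def by blast
  then show ?thesis by (simp add: poly_z_zbar.intros poly_z_zbar_sum poly_z_zbar_zv)
qed

lemma poly_z_zbar_hermitian_form:
  assumes "is_hermitian_form A" shows "poly_z_zbar (\<lambda>q. A (fst q) (fst (snd q)))"
proof -
  obtain c where "\<And>z1 z2. A z1 z2 = (\<Sum>i<2. \<Sum>j<2. c i j * zv z1 z2 i * cnj (zv z1 z2 j))"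
    using assms unfolding is_hermitian_form_def by blast
  then show ?thesis by (simp add: poly_z_zbar.intros poly_z_zbar_sum poly_z_zbar_zv)
qed


definition homogeneous_deg :: "nat \<Rightarrow> (pt \<Rightarrow> complex) \<Rightarrow> bool" where
  "homogeneous_deg d g \<longleftrightarrow> (\<forall>t q. t \<noteq> 0 \<longrightarrow> g (t *\<^sub>R q) = of_real t ^ d * g q)"

lemma Dd_homogeneous:
  assumes g: "poly_z_zbar g" and h: "homogeneous_deg (Suc d) g"
  shows "homogeneous_deg d (Dd v g)"
  unfolding homogeneous_deg_def
proof (intro allI impI)
  fix t :: real and q :: pt assume t: "t \<noteq> 0"
  have "(\<lambda>q. g (t *\<^sub>R q)) = (\<lambda>q. of_real t ^ Suc d * g q)"
    using h t unfolding homogeneous_deg_def by auto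
  then have scaled: "Dd v (\<lambda>q. g (t *\<^sub>R q)) q = of_real t ^ Suc d * Dd v g q"
    using Dd_cmult_at[OF poly_z_zbar_line_differentiable[OF g]] by simp
  have "((\<lambda>s::real. t * s) has_vector_derivative t) (at 0)"
    using has_vector_derivative_mult_right[OF has_vector_derivative_id, of t] by simp
  from vector_diff_chain_at[OF this, of "\<lambda>s. g (t *\<^sub>R q + s *\<^sub>R v)"]
  have "((\<lambda>s. g (t *\<^sub>R (q + s *\<^sub>R v))) has_vector_derivative t *\<^sub>R Dd v g (t *\<^sub>R q)) (at 0)"
    using Dd_has_vector_derivative[OF poly_z_zbar_line_differentiable[OF g], of "t *\<^sub>R q" v]
    by (simp add: o_def scaleR_add_right)
  then have "Dd v (\<lambda>q. g (t *\<^sub>R q)) q = t *\<^sub>R Dd v g (t *\<^sub>R q)"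
    by (rule Dd_eqI)
  with scaled have "of_real t * Dd v g (t *\<^sub>R q) = of_real t * (of_real t ^ d * Dd v g q)"
    by (simp add: scaleR_conv_of_real)
  then show "Dd v g (t *\<^sub>R q) = of_real t ^ d * Dd v g q" using t by simp
qed

lemma dZ_dZb_homogeneous:
  assumes g: "poly_z_zbar g" and h: "homogeneous_deg d g" and d: "2 \<le> d" and t: "t \<noteq> 0"
  shows "dZ j (dZb k g) (t *\<^sub>R q) = of_real t ^ (d - 2) * dZ j (dZb k g) q"
proof -
  obtain e where e: "d = Suc (Suc e)" using le_Suc_ex[OF d] by auto
  have "Dd u (Dd v g) (t *\<^sub>R q) = of_real t ^ e * Dd u (Dd v g) q" for u v
    using Dd_homogeneous[OF poly_z_zbar_Dd[OF g] Dd_homogeneous[OF g h[unfolded e]]] t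
    unfolding homogeneous_deg_def by blast
  then show ?thesis unfolding dZ_dZb_poly_z_zbar[OF g] e by (simp add: field_simps)
qed

lemma zv_scale: "zv (of_real t * x) (of_real t * y) i = of_real t * zv x y i"
  by (simp add: zv_def)

lemma linear_form_homogeneous:
  assumes "is_linear_form A" shows "A (of_real t * x) (of_real t * y) = of_real t * A x y"
proof -
  obtain a b where "\<And>z1 z2. A z1 z2 = a * z1 + b * z2"
    using assms unfolding is_linear_form_def by blast
  then show ?thesis by (simp add: algebra_simps)
qed

lemma quadratic_form_homogeneous:
  assumes "is_quadratic_form A" shows "A (of_real t * x) (of_real t * y) = of_real t ^ 2 * A x y"
proof -
  obtain a b c where "\<And>z1 z2. A z1 z2 = a * z1^2 + b * z1 * z2 + c * z2^2"
    using assms unfolding is_quadratic_form_def by blast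
  then show ?thesis by (simp add: algebra_simps power2_eq_square)
qed

lemma cubic_form_homogeneous:
  assumes "is_cubic_form A" shows "A (of_real t * x) (of_real t * y) = of_real t ^ 3 * A x y"
proof -
  obtain a b c d where "\<And>z1 z2. A z1 z2 = a * z1^3 + b * z1^2 * z2 + c * z1 * z2^2 + d * z2^3"
    using assms unfolding is_cubic_form_def by blast
  then show ?thesis by (simp add: algebra_simps power2_eq_square power3_eq_cube)
qed

lemma bideg21_homogeneous:
  assumes "is_bideg21 A" shows "A (of_real t * x) (of_real t * y) = of_real t ^ 3 * A x y"
proof -
  obtain c where c: "\<And>z1 z2. A z1 z2 =
      (\<Sum>i<2. \<Sum>j<2. \<Sum>l<2. c i j l * zv z1 z2 i * zv z1 z2 j * cnj (zv z1 z2 l))"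
    using assms unfolding is_bideg21_def by blast
  show ?thesis unfolding c zv_scale sum_distrib_left
    by (intro sum.cong refl) (simp add: power3_eq_cube mult_ac)
qed

lemma bideg22_homogeneous:
  assumes "is_bideg22 A" shows "A (of_real t * x) (of_real t * y) = of_real t ^ 4 * A x y"
proof -
  obtain c where c: "\<And>z1 z2. A z1 z2 = (\<Sum>i<2. \<Sum>j<2. \<Sum>l<2. \<Sum>r<2.
      c i j l r * zv z1 z2 i * zv z1 z2 j * cnj (zv z1 z2 l) * cnj (zv z1 z2 r))"
    using assms unfolding is_bideg22_def by blast
  show ?thesis unfolding c zv_scale sum_distrib_left
    by (intro sum.cong refl) (simp add: power4_eq_xxxx mult_ac)
qed

lemma hermitian_form_homogeneous:
  assumes "is_hermitian_form A" shows "A (of_real t * x) (of_real t * y) = of_real t ^ 2 * A x y"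
proof -
  obtain c where c: "\<And>z1 z2. A z1 z2 = (\<Sum>i<2. \<Sum>j<2. c i j * zv z1 z2 i * cnj (zv z1 z2 j))"
    using assms unfolding is_hermitian_form_def by blast
  show ?thesis unfolding c zv_scale sum_distrib_left
    by (intro sum.cong refl) (simp add: power2_eq_square mult_ac)
qed


section \<open>Second derivatives of a function vanishing to fifth order\<close>

lemma maclaurin_order5:
  fixes f :: "real \<Rightarrow> real"
  assumes x: "0 < x" and d0: "diff 0 = f"
    and dS: "\<forall>m t. m < 5 \<and> 0 \<le> t \<and> t \<le> x \<longrightarrow> DERIV (diff m) t :> diff (Suc m) t"
    and M: "\<forall>t. 0 \<le> t \<and> t \<le> x \<longrightarrow> \<bar>diff 5 t\<bar> \<le> M"
  shows "\<exists>R. \<bar>R\<bar> \<le> M * x^5 / 120 \<and>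
    f x = diff 0 0 + diff 1 0 * x + diff 2 0 / 2 * x^2 + diff 3 0 / 6 * x^3 + diff 4 0 / 24 * x^4 + R"
proof -
  obtain t where t: "0 < t" "t < x"
    and taylor: "f x = (\<Sum>m<5. diff m 0 / fact m * x^m) + diff 5 t / fact 5 * x^5"
    using Maclaurin[OF x _ d0 dS] by auto
  have "\<bar>diff 5 t\<bar> \<le> M" using M t by auto
  moreover have "(fact 5 :: real) = 120" by (simp add: fact_numeral)
  ultimately have "\<bar>diff 5 t / fact 5 * x^5\<bar> \<le> M * x^5 / 120"
    using x by (simp add: abs_mult divide_right_mono mult_right_mono)
  moreover have "(\<Sum>m<5. diff m 0 / fact m * x^m) =
      diff 0 0 + diff 1 0 * x + diff 2 0 / 2 * x^2 + diff 3 0 / 6 * x^3 + diff 4 0 / 24 * x^4"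
    by (simp add: numeral_eq_Suc fact_numeral)
  ultimately show ?thesis using taylor by auto
qed

text \<open>The one-sided five-point difference quotient
  \<open>(-25 f 0 + 48 f h - 36 f 2h + 16 f 3h - 3 f 4h) / 12h\<close> is exact on quartics, so it bounds
  \<open>f' 0\<close> by \<open>sup |f|\<close> and \<open>sup |f\<^sup>(\<^sup>5\<^sup>)|\<close> alone.\<close>
lemma five_point_derivative_bound:
  fixes f :: "real \<Rightarrow> real"
  assumes h: "h > 0" and d0: "diff 0 = f"
    and dS: "\<forall>m t. m < 5 \<and> 0 \<le> t \<and> t \<le> 4*h \<longrightarrow> DERIV (diff m) t :> diff (Suc m) t"
    and E: "\<forall>t. 0 \<le> t \<and> t \<le> 4*h \<longrightarrow> \<bar>f t\<bar> \<le> E"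
    and M: "\<forall>t. 0 \<le> t \<and> t \<le> 4*h \<longrightarrow> \<bar>diff 5 t\<bar> \<le> M"
  shows "\<bar>diff 1 0\<bar> \<le> 11 * E / h + 6 * M * h^4"
proof -
  define p where "p x = diff 0 0 + diff 1 0 * x + diff 2 0 / 2 * x^2 + diff 3 0 / 6 * x^3
    + diff 4 0 / 24 * x^4" for x
  have T: "\<exists>R. \<bar>R\<bar> \<le> M * (j*h)^5 / 120 \<and> f (j*h) = p (j*h) + R" if j: "j \<in> {1,2,3,4}" for j :: real
  proof -
    have "1 \<le> j" "j \<le> 4" using j by auto
    then have jh: "0 < j*h" "j*h \<le> 4*h" using h by (simp_all add: mult_right_mono)
    show ?thesis unfolding p_def
      using dS M jh(2) by (intro maclaurin_order5[where diff = diff, OF jh(1) d0]) auto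
  qed
  obtain R1 where R1: "\<bar>R1\<bar> \<le> M * (1*h)^5 / 120" "f (1*h) = p (1*h) + R1" using T[of 1] by auto
  obtain R2 where R2: "\<bar>R2\<bar> \<le> M * (2*h)^5 / 120" "f (2*h) = p (2*h) + R2" using T[of 2] by auto
  obtain R3 where R3: "\<bar>R3\<bar> \<le> M * (3*h)^5 / 120" "f (3*h) = p (3*h) + R3" using T[of 3] by auto
  obtain R4 where R4: "\<bar>R4\<bar> \<le> M * (4*h)^5 / 120" "f (4*h) = p (4*h) + R4" using T[of 4] by auto
  have stencil: "12 * h * diff 1 0 = -25 * f 0 + 48 * f (1*h) - 36 * f (2*h) + 16 * f (3*h) - 3 * f (4*h)
     - (48 * R1 - 36 * R2 + 16 * R3 - 3 * R4)"
    unfolding R1(2) R2(2) R3(2) R4(2) d0[symmetric, THEN fun_cong, of 0] p_def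
    by (simp add: algebra_simps power2_eq_square power3_eq_cube power4_eq_xxxx)
  have "\<bar>f 0\<bar> \<le> E" "\<bar>f (1*h)\<bar> \<le> E" "\<bar>f (2*h)\<bar> \<le> E" "\<bar>f (3*h)\<bar> \<le> E" "\<bar>f (4*h)\<bar> \<le> E"
    using E h by auto
  then have "\<bar>-25 * f 0 + 48 * f (1*h) - 36 * f (2*h) + 16 * f (3*h) - 3 * f (4*h)\<bar> \<le> 128 * E"
    unfolding abs_le_iff by linarith
  moreover have "\<bar>48 * R1 - 36 * R2 + 16 * R3 - 3 * R4\<bar> \<le> 48 * \<bar>R1\<bar> + 36 * \<bar>R2\<bar> + 16 * \<bar>R3\<bar> + 3 * \<bar>R4\<bar>"
    by (simp add: abs_le_iff) linarith
  ultimately have "\<bar>12 * h * diff 1 0\<bar> \<le> 128 * E + (48 * \<bar>R1\<bar> + 36 * \<bar>R2\<bar> + 16 * \<bar>R3\<bar> + 3 * \<bar>R4\<bar>)"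
    unfolding stencil by (smt (verit) abs_triangle_ineq4)
  also have "\<dots> \<le> 128 * E + 68 * M * h^5"
    using R1(1) R2(1) R3(1) R4(1) by (simp add: power_mult_distrib)
  finally have "12 * h * \<bar>diff 1 0\<bar> \<le> 128 * E + 68 * M * h^5" using h by (simp add: abs_mult)
  then have "\<bar>diff 1 0\<bar> \<le> (128 * E + 68 * M * h^5) / (12 * h)" using h by (simp add: field_simps)
  also have "\<dots> = 128/12 * E / h + 68/12 * M * h^4" using h by (simp add: field_simps power_eq_if)
  also have "\<dots> \<le> 11 * E / h + 6 * M * h^4"
  proof -
    have "E \<ge> 0" "M \<ge> 0" using E M h by force+
    then show ?thesis using h by (intro add_mono divide_right_mono mult_right_mono) auto
  qed
  finally show ?thesis .
qed

lemma C_inf_on_line_differentiable: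
  "C_inf_on U G \<Longrightarrow> p \<in> U \<Longrightarrow> line_differentiable (foldr Dd vs G) p v"
  unfolding C_inf_on_def line_differentiable_def by blast

lemma C_inf_on_Dd:
  assumes "C_inf_on U G" shows "C_inf_on U (Dd w G)"
  unfolding C_inf_on_def
proof (rule allI, rule conjI)
  fix vs
  have H: "continuous_on U (foldr Dd vs G) \<and>
      (\<forall>v. \<forall>p\<in>U. (\<lambda>t::real. foldr Dd vs G (p + t *\<^sub>R v)) differentiable (at 0))" for vs
    using assms unfolding C_inf_on_def by blast
  have e: "foldr Dd vs (Dd w G) = foldr Dd (vs @ [w]) G" by simp
  show "continuous_on U (foldr Dd vs (Dd w G))" unfolding e using H by blast
  show "\<forall>v. \<forall>p\<in>U. (\<lambda>t::real. foldr Dd vs (Dd w G) (p + t *\<^sub>R v)) differentiable (at 0)"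
    unfolding e using H by blast
qed

lemma C_inf_on_line_derivative:
  assumes "C_inf_on U G" "q + s *\<^sub>R w \<in> U"
  shows "((\<lambda>s. foldr Dd vs G (q + s *\<^sub>R w)) has_vector_derivative
      Dd w (foldr Dd vs G) (q + s *\<^sub>R w)) (at s)"
proof -
  let ?F = "foldr Dd vs G" and ?p = "q + s *\<^sub>R w"
  have g: "((\<lambda>\<tau>::real. ?F (?p + \<tau> *\<^sub>R w)) has_vector_derivative Dd w ?F ?p) (at ((\<lambda>\<sigma>. \<sigma> - s) s))"
    using Dd_has_vector_derivative[OF C_inf_on_line_differentiable[OF assms]] by simp
  have f: "((\<lambda>\<sigma>::real. \<sigma> - s) has_vector_derivative 1) (at s)"
    by (rule has_vector_derivative_diff[of "\<lambda>x. x" 1 _ "\<lambda>x. s" 0, simplified])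
  have "((\<lambda>\<tau>. ?F (?p + \<tau> *\<^sub>R w)) \<circ> (\<lambda>\<sigma>. \<sigma> - s) has_vector_derivative 1 *\<^sub>R Dd w ?F ?p) (at s)"
    by (rule vector_diff_chain_at[OF f g])
  moreover have "(\<lambda>\<tau>. ?F (?p + \<tau> *\<^sub>R w)) \<circ> (\<lambda>\<sigma>. \<sigma> - s) = (\<lambda>\<sigma>. ?F (q + \<sigma> *\<^sub>R w))"
    by (auto simp: algebra_simps)
  ultimately show ?thesis by simp
qed

lemma component_Dd_bound_on_segment:
  assumes P: "bounded_linear P" "\<And>z. \<bar>P z\<bar> \<le> cmod z"
    and CI: "C_inf_on U G" and d: "0 < d"
    and sub: "\<forall>s. 0 \<le> s \<and> s \<le> d \<longrightarrow> q + s *\<^sub>R w \<in> U"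
    and E: "\<forall>s. 0 \<le> s \<and> s \<le> d \<longrightarrow> norm (G (q + s *\<^sub>R w)) \<le> E"
    and M: "\<forall>s. 0 \<le> s \<and> s \<le> d \<longrightarrow> norm (foldr Dd (replicate 5 w) G (q + s *\<^sub>R w)) \<le> M"
  shows "\<bar>P (Dd w G q)\<bar> \<le> 11 * E / (d/4) + 6 * M * (d/4)^4"
proof -
  let ?diff = "\<lambda>(m::nat) (s::real). P (foldr Dd (replicate m w) G (q + s *\<^sub>R w))"
  have "\<forall>m t. m < 5 \<and> 0 \<le> t \<and> t \<le> 4*(d/4) \<longrightarrow> DERIV (?diff m) t :> ?diff (Suc m) t"
  proof (intro allI impI)
    fix m :: nat and t :: real assume "m < 5 \<and> 0 \<le> t \<and> t \<le> 4 * (d / 4)"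
    then have "q + t *\<^sub>R w \<in> U" using sub by auto
    from bounded_linear.has_vector_derivative[OF P(1) C_inf_on_line_derivative[OF CI this, of "replicate m w"]]
    show "DERIV (?diff m) t :> ?diff (Suc m) t"
      by (simp add: has_real_derivative_iff_has_vector_derivative)
  qed
  then have "\<bar>?diff 1 0\<bar> \<le> 11 * E / (d/4) + 6 * M * (d/4)^4"
  proof (intro five_point_derivative_bound[OF _ refl])
    show "\<forall>t. 0 \<le> t \<and> t \<le> 4 * (d / 4) \<longrightarrow> \<bar>?diff 0 t\<bar> \<le> E"
      using E order_trans[OF P(2)] by simp
    show "\<forall>t. 0 \<le> t \<and> t \<le> 4 * (d / 4) \<longrightarrow> \<bar>?diff 5 t\<bar> \<le> M"
      using M order_trans[OF P(2)] by simp
  qed (use d in simp)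
  then show ?thesis by simp
qed

lemma Dd_bound_on_segment:
  assumes CI: "C_inf_on U G" and d: "0 < d" "d \<le> 1"
    and sub: "\<forall>s. 0 \<le> s \<and> s \<le> d \<longrightarrow> q + s *\<^sub>R w \<in> U"
    and E: "\<forall>s. 0 \<le> s \<and> s \<le> d \<longrightarrow> norm (G (q + s *\<^sub>R w)) \<le> E"
    and M: "\<forall>s. 0 \<le> s \<and> s \<le> d \<longrightarrow> norm (foldr Dd (replicate 5 w) G (q + s *\<^sub>R w)) \<le> M"
  shows "norm (Dd w G q) \<le> 88 * E / d + M * d^4"
proof -
  have "norm (Dd w G q) \<le> \<bar>Re (Dd w G q)\<bar> + \<bar>Im (Dd w G q)\<bar>" by (rule cmod_le)
  also have "\<dots> \<le> 2 * (11 * E / (d/4) + 6 * M * (d/4)^4)"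
    using component_Dd_bound_on_segment[OF bounded_linear_Re abs_Re_le_cmod CI d(1) sub E M]
      component_Dd_bound_on_segment[OF bounded_linear_Im abs_Im_le_cmod CI d(1) sub E M]
    by simp
  also have "\<dots> \<le> 88 * E / d + M * d^4"
  proof -
    have "M \<ge> 0" using M d by (metis norm_ge_zero order_trans order_refl less_imp_le)
    then show ?thesis using d by (simp add: field_simps power_divide)
  qed
  finally show ?thesis .
qed

lemma Dd_bound_near_zero:
  assumes CI: "C_inf_on U G" and r: "cball 0 r \<subseteq> U"
    and B: "\<forall>q\<in>cball 0 r. norm (G q) \<le> C * norm q ^ k" and C: "C \<ge> 0"
    and M: "\<forall>p\<in>cball 0 r. norm (foldr Dd (replicate 5 w) G p) \<le> M"
    and k: "1 \<le> k" "k \<le> 5" and w: "norm w = 1"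
    and q: "norm q \<le> \<delta>" and \<delta>: "0 < \<delta>" "2 * \<delta> \<le> r" "\<delta> \<le> 1"
  shows "norm (Dd w G q) \<le> (88 * C * 2^k + M) * \<delta>^(k-1)"
proof -
  have seg: "q + s *\<^sub>R w \<in> cball 0 r" "norm (q + s *\<^sub>R w) \<le> 2 * \<delta>" if "0 \<le> s" "s \<le> \<delta>" for s
  proof -
    have "norm (q + s *\<^sub>R w) \<le> norm q + norm (s *\<^sub>R w)" by (rule norm_triangle_ineq)
    also have "\<dots> \<le> 2 * \<delta>" using that q w by simp
    finally show "norm (q + s *\<^sub>R w) \<le> 2 * \<delta>" .
    then show "q + s *\<^sub>R w \<in> cball 0 r" using \<delta> by simp
  qed
  have "norm (foldr Dd (replicate 5 w) G 0) \<le> M" using M \<delta> by simp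
  then have M0: "M \<ge> 0" using norm_ge_zero order_trans by blast
  have "norm (Dd w G q) \<le> 88 * (C * (2*\<delta>)^k) / \<delta> + M * \<delta>^4"
  proof (rule Dd_bound_on_segment[OF CI \<delta>(1,3)])
    show "\<forall>s. 0 \<le> s \<and> s \<le> \<delta> \<longrightarrow> q + s *\<^sub>R w \<in> U" using seg r by blast
    show "\<forall>s. 0 \<le> s \<and> s \<le> \<delta> \<longrightarrow> norm (G (q + s *\<^sub>R w)) \<le> C * (2 * \<delta>) ^ k"
    proof (intro allI impI)
      fix s assume s: "0 \<le> s \<and> s \<le> \<delta>"
      have "norm (G (q + s *\<^sub>R w)) \<le> C * norm (q + s *\<^sub>R w) ^ k" using B seg s by blast
      also have "\<dots> \<le> C * (2 * \<delta>) ^ k" using seg s C by (intro mult_left_mono power_mono) auto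
      finally show "norm (G (q + s *\<^sub>R w)) \<le> C * (2 * \<delta>) ^ k" .
    qed
    show "\<forall>s. 0 \<le> s \<and> s \<le> \<delta> \<longrightarrow> norm (foldr Dd (replicate 5 w) G (q + s *\<^sub>R w)) \<le> M"
      using M seg by blast
  qed
  also have "\<dots> = 88 * C * 2^k * \<delta>^(k-1) + M * \<delta>^4"
  proof -
    have "(2*\<delta>)^k / \<delta> = 2^k * \<delta>^(k-1)" using \<delta> k by (simp add: power_mult_distrib power_eq_if)
    moreover have "88 * (C * (2*\<delta>)^k) / \<delta> = 88 * C * ((2*\<delta>)^k / \<delta>)" by simp
    ultimately show ?thesis by simp
  qed
  also have "\<dots> \<le> 88 * C * 2^k * \<delta>^(k-1) + M * \<delta>^(k-1)"
    using \<delta> k M0 by (intro add_left_mono mult_left_mono power_decreasing) auto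
  finally show ?thesis by (simp add: algebra_simps)
qed

lemma norm_bounded_by_powers_imp_zero:
  fixes x :: "'a::real_normed_vector"
  assumes r: "0 < r" and j: "1 \<le> j" and bound: "\<And>\<delta>. 0 < \<delta> \<Longrightarrow> \<delta> \<le> r \<Longrightarrow> norm x \<le> K * \<delta> ^ j"
  shows "x = 0"
proof (rule ccontr)
  assume "x \<noteq> 0"
  then have x: "norm x > 0" by simp
  define \<delta> where "\<delta> = min (min r 1) (norm x / (2 * (\<bar>K\<bar> + 1)))"
  have \<delta>: "0 < \<delta>" "\<delta> \<le> r" "\<delta> \<le> 1" "\<delta> \<le> norm x / (2 * (\<bar>K\<bar> + 1))"
    using x r by (auto simp: \<delta>_def)
  have "norm x \<le> K * \<delta> ^ j" using bound \<delta> by blast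
  also have "\<dots> \<le> \<bar>K\<bar> * \<delta> ^ j" using \<delta> by (simp add: mult_right_mono)
  also have "\<dots> \<le> \<bar>K\<bar> * \<delta> ^ 1" using \<delta> j by (intro mult_left_mono power_decreasing) auto
  also have "\<dots> \<le> \<bar>K\<bar> * (norm x / (2 * (\<bar>K\<bar> + 1)))" using \<delta> by (intro mult_left_mono) auto
  also have "\<dots> < norm x" using x by (simp add: field_simps add_nonneg_pos)
  finally show False by simp
qed

lemma Dd_vanishing_order:
  assumes CI: "C_inf_on U G" and r: "r > 0" "cball 0 r \<subseteq> U"
    and B: "\<forall>q\<in>cball 0 r. norm (G q) \<le> C * norm q ^ k"
    and k: "2 \<le> k" "k \<le> 5" and w: "norm w = 1"
  shows "\<exists>C'. \<forall>q\<in>cball 0 (min (r/2) 1). norm (Dd w G q) \<le> C' * norm q ^ (k-1)"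
proof -
  let ?F5 = "foldr Dd (replicate 5 w) G" and ?r' = "min (r/2) 1"
  have "continuous_on (cball 0 r) ?F5"
    using CI r(2) unfolding C_inf_on_def by (meson continuous_on_subset)
  then have "bounded (?F5 ` cball 0 r)"
    by (intro compact_imp_bounded compact_continuous_image) auto
  then obtain M where M: "\<forall>p\<in>cball 0 r. norm (?F5 p) \<le> M"
    unfolding bounded_iff by auto
  have B': "\<forall>q\<in>cball 0 r. norm (G q) \<le> max C 0 * norm q ^ k"
  proof
    fix q :: pt assume "q \<in> cball 0 r"
    then have "norm (G q) \<le> C * norm q ^ k" using B by blast
    also have "\<dots> \<le> max C 0 * norm q ^ k" by (simp add: mult_right_mono)
    finally show "norm (G q) \<le> max C 0 * norm q ^ k" .
  qed
  define K where "K = 88 * max C 0 * 2^k + M"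
  have bound: "norm (Dd w G q) \<le> K * \<delta>^(k-1)" if q: "norm q \<le> \<delta>" and \<delta>: "0 < \<delta>" "\<delta> \<le> ?r'" for q \<delta>
  proof -
    have "2 * \<delta> \<le> r" "\<delta> \<le> 1" using \<delta> by auto
    with k show ?thesis unfolding K_def
      using Dd_bound_near_zero[OF CI r(2) B' _ M _ _ w q \<delta>(1)] by simp
  qed
  have "Dd w G 0 = 0"
    using r k bound[of 0] by (intro norm_bounded_by_powers_imp_zero[of ?r' "k-1" _ K]) auto
  then have "norm (Dd w G q) \<le> K * norm q ^ (k - 1)" if "q \<in> cball 0 ?r'" for q
  proof (cases "q = 0")
    case True
    then show ?thesis using \<open>Dd w G 0 = 0\<close> k by (simp add: power_0_left)
  next
    case False
    then show ?thesis using bound[of q "norm q"] that by simp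
  qed
  then show ?thesis by blast
qed

lemma norm_ev: "norm (ev j c) = cmod c"
  by (simp add: ev_def norm_Pair)

lemma Dd_Dd_cubic_bound:
  assumes CI: "C_inf_on U G" and r: "r > 0" "cball 0 r \<subseteq> U"
    and B: "\<forall>q\<in>cball 0 r. norm (G q) \<le> C * norm q ^ 5"
    and u: "norm u = 1" and v: "norm v = 1"
  shows "\<exists>C'. \<forall>q\<in>cball 0 (min (min (r/2) 1 / 2) 1). norm (Dd u (Dd v G) q) \<le> C' * norm q ^ 3"
proof -
  let ?r1 = "min (r/2) 1"
  obtain C1 where "\<forall>q\<in>cball 0 ?r1. norm (Dd v G q) \<le> C1 * norm q ^ 4"
    using Dd_vanishing_order[OF CI r B _ _ v] by auto
  moreover have "?r1 > 0" "cball 0 ?r1 \<subseteq> U" using r by auto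
  ultimately show ?thesis
    using Dd_vanishing_order[OF C_inf_on_Dd[OF CI], where r = "min (r/2) 1" and C = C1 and k = 4]
      u by auto
qed

lemma dZ_dZb_C_inf_on:
  assumes CI: "C_inf_on U G" and q: "q \<in> U"
  shows "dZ j (dZb k G) q = (Dd (ev j 1) (Dd (ev k 1) G) q + \<i> * Dd (ev j 1) (Dd (ev k \<i>) G) q
      - \<i> * Dd (ev j \<i>) (Dd (ev k 1) G) q + Dd (ev j \<i>) (Dd (ev k \<i>) G) q) / 4"
  using C_inf_on_line_differentiable[OF CI q, of "[ev k 1]"]
    C_inf_on_line_differentiable[OF CI q, of "[ev k \<i>]"]
  by (intro dZ_dZb_eq_Dd) auto

lemma dZ_dZb_cubic_bound:
  assumes CI: "C_inf_on U G" and U: "open U" "0 \<in> U"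
    and B: "\<forall>p\<in>U. norm (G p) \<le> C * norm p ^ 5"
  shows "\<exists>C' r'. 0 < r' \<and> cball 0 r' \<subseteq> U \<and> (\<forall>q\<in>cball 0 r'. norm (dZ j (dZb k G) q) \<le> C' * norm q ^ 3)"
proof -
  obtain r where r: "r > 0" "cball 0 r \<subseteq> U" using U open_contains_cball by blast
  define \<rho> where "\<rho> = min (min (r/2) 1 / 2) 1"
  have \<rho>: "0 < \<rho>" "cball 0 \<rho> \<subseteq> U" using r by (auto simp: \<rho>_def)
  have ex: "\<exists>C. \<forall>q\<in>cball 0 \<rho>. norm (Dd (ev j u) (Dd (ev k v) G) q) \<le> C * norm q ^ 3"
    if "cmod u = 1" "cmod v = 1" for u v
    unfolding \<rho>_def using B r that by (intro Dd_Dd_cubic_bound[OF CI r]) (auto simp: norm_ev)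
  obtain C1 where 1: "\<forall>q\<in>cball 0 \<rho>. norm (Dd (ev j 1) (Dd (ev k 1) G) q) \<le> C1 * norm q ^ 3"
    using ex[of 1 1] by auto
  obtain C2 where 2: "\<forall>q\<in>cball 0 \<rho>. norm (Dd (ev j 1) (Dd (ev k \<i>) G) q) \<le> C2 * norm q ^ 3"
    using ex[of 1 \<i>] by auto
  obtain C3 where 3: "\<forall>q\<in>cball 0 \<rho>. norm (Dd (ev j \<i>) (Dd (ev k 1) G) q) \<le> C3 * norm q ^ 3"
    using ex[of \<i> 1] by auto
  obtain C4 where 4: "\<forall>q\<in>cball 0 \<rho>. norm (Dd (ev j \<i>) (Dd (ev k \<i>) G) q) \<le> C4 * norm q ^ 3"
    using ex[of \<i> \<i>] by auto
  have "norm (dZ j (dZb k G) q) \<le> (C1 + C2 + C3 + C4) / 4 * norm q ^ 3" if q: "q \<in> cball 0 \<rho>" for q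
  proof -
    let ?a = "Dd (ev j 1) (Dd (ev k 1) G) q" and ?b = "Dd (ev j 1) (Dd (ev k \<i>) G) q"
      and ?c = "Dd (ev j \<i>) (Dd (ev k 1) G) q" and ?d = "Dd (ev j \<i>) (Dd (ev k \<i>) G) q"
    have "norm (dZ j (dZb k G) q) = norm (?a + \<i> * ?b - \<i> * ?c + ?d) / 4"
      using q \<rho> by (subst dZ_dZb_C_inf_on[OF CI]) auto
    also have "\<dots> \<le> (norm ?a + norm ?b + norm ?c + norm ?d) / 4"
    proof -
      have "norm (?a + \<i> * ?b - \<i> * ?c + ?d) \<le> norm (?a + \<i> * ?b - \<i> * ?c) + norm ?d"
        by (rule norm_triangle_ineq)
      moreover have "norm (?a + \<i> * ?b - \<i> * ?c) \<le> norm (?a + \<i> * ?b) + norm (\<i> * ?c)"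
        by (rule norm_triangle_ineq4)
      moreover have "norm (?a + \<i> * ?b) \<le> norm ?a + norm (\<i> * ?b)" by (rule norm_triangle_ineq)
      moreover have "norm (\<i> * ?b) = norm ?b" "norm (\<i> * ?c) = norm ?c" by (simp_all add: norm_mult)
      ultimately show ?thesis by (intro divide_right_mono) linarith+
    qed
    also have "\<dots> \<le> (C1 * norm q ^ 3 + C2 * norm q ^ 3 + C3 * norm q ^ 3 + C4 * norm q ^ 3) / 4"
      using 1 2 3 4 q by (intro divide_right_mono add_mono) auto
    finally show ?thesis by (simp add: algebra_simps)
  qed
  then show ?thesis using \<rho> by blast
qed

lemma cHess_poly_plus_C_inf:
  assumes f_eq: "\<And>q. complex_of_real (f q) = g q + G q" and g: "poly_z_zbar g"
    and G: "C_inf_on U G" and U: "open U" and q: "q \<in> U"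
  shows "cHess f q j k = dZ j (dZb k g) q + dZ j (dZb k G) q"
proof -
  have G_diff: "line_differentiable G p v" if "p \<in> U" for p v
    using C_inf_on_line_differentiable[OF G that, of "[]"] by simp
  have G_dZb_diff: "line_differentiable (dZb k G) q v" for v
    unfolding dZb_def
    using C_inf_on_line_differentiable[OF G q, of "[ev k 1]" v]
      C_inf_on_line_differentiable[OF G q, of "[ev k \<i>]" v]
    by (intro line_differentiable_divide line_differentiable_add line_differentiable_cmult) auto
  have "dZb k (\<lambda>q. complex_of_real (f q)) p = dZb k g p + dZb k G p" if "p \<in> U" for p
    unfolding f_eq
    using poly_z_zbar_line_differentiable[OF g] G_diff[OF that] by (intro dZb_add_at)
  then have "cHess f q j k = dZ j (\<lambda>p. dZb k g p + dZb k G p) q"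
    unfolding cHess_def dZ_def using Dd_local[OF U q, of "dZb k (\<lambda>q. complex_of_real (f q))"] by simp
  also have "\<dots> = dZ j (dZb k g) q + dZ j (dZb k G) q"
    using poly_z_zbar_line_differentiable[OF poly_z_zbar_dZb[OF g]] G_dZb_diff by (intro dZ_add_at)
  finally show ?thesis .
qed

section \<open>The model hypersurface\<close>

definition hermitian_part :: "(nat \<Rightarrow> nat \<Rightarrow> complex) \<Rightarrow> pt \<Rightarrow> complex" where
  "hermitian_part h q = h 0 0 * (fst q * cnj (fst q)) + h 0 1 * (fst q * cnj (fst (snd q)))
     + h 1 0 * (fst (snd q) * cnj (fst q)) + h 1 1 * (fst (snd q) * cnj (fst (snd q)))"

definition quad_form :: "complex \<Rightarrow> complex \<Rightarrow> complex \<Rightarrow> complex \<Rightarrow> complex \<Rightarrow> complex" where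
  "quad_form a b c x y = a * x^2 + b * x * y + c * y^2"

lemma is_quadratic_form_quad_form: "is_quadratic_form (quad_form a b c)"
  unfolding quad_form_def[abs_def] is_quadratic_form_def by blast

definition cubic_part ::
    "(complex \<Rightarrow> complex \<Rightarrow> complex) \<Rightarrow> (complex \<Rightarrow> complex \<Rightarrow> complex) \<Rightarrow> complex \<Rightarrow> pt \<Rightarrow> complex" where
  "cubic_part K A1 A2 q = complex_of_real (2 * Re (K (fst q) (fst (snd q)) * cnj (snd (snd q))
      + A1 (fst q) (fst (snd q)) * of_real ((cmod (snd (snd q)))^2)
      + A2 * (snd (snd q))^2 * cnj (snd (snd q))))"

definition quartic_part :: "(complex \<Rightarrow> complex \<Rightarrow> complex) \<Rightarrow> (complex \<Rightarrow> complex \<Rightarrow> complex)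
    \<Rightarrow> (complex \<Rightarrow> complex \<Rightarrow> complex) \<Rightarrow> (complex \<Rightarrow> complex \<Rightarrow> complex) \<Rightarrow> (complex \<Rightarrow> complex \<Rightarrow> complex)
    \<Rightarrow> (complex \<Rightarrow> complex \<Rightarrow> complex) \<Rightarrow> (complex \<Rightarrow> complex \<Rightarrow> complex) \<Rightarrow> (complex \<Rightarrow> complex \<Rightarrow> complex)
    \<Rightarrow> pt \<Rightarrow> complex" where
  "quartic_part P Q R S T B1 B2 B3 q =
      complex_of_real (2 * Re ((P (fst q) (fst (snd q)) + Q (fst q) (fst (snd q))) * cnj (snd (snd q))
          + R (fst q) (fst (snd q)) * (cnj (snd (snd q)))^2))
      + S (fst q) (fst (snd q)) * of_real ((cmod (snd (snd q)))^2) + T (fst q) (fst (snd q))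
      + complex_of_real (2 * Re (B1 (fst q) (fst (snd q)) * of_real ((cmod (snd (snd q)))^2)
          + B2 (fst q) (fst (snd q)) * (snd (snd q))^2 * cnj (snd (snd q))
          + B3 (fst q) (fst (snd q)) * (snd (snd q)) * (cnj (snd (snd q)))^2))"

lemma poly_z_zbar_hermitian_part: "poly_z_zbar (hermitian_part h)"
  unfolding hermitian_part_def[abs_def] by (intro poly_z_zbar.intros)

lemma poly_z_zbar_cubic_part:
  assumes "is_quadratic_form K" "is_linear_form A1" shows "poly_z_zbar (cubic_part K A1 A2)"
  unfolding cubic_part_def[abs_def]
  by (intro poly_z_zbar_Re poly_z_zbar.add poly_z_zbar.mult poly_z_zbar.cnj poly_z_zbar.zeta
      poly_z_zbar.const poly_z_zbar_power poly_z_zbar_norm_square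
      poly_z_zbar_quadratic_form[OF assms(1)] poly_z_zbar_linear_form[OF assms(2)])

lemma poly_z_zbar_quartic_part:
  assumes "is_bideg21 P" "is_cubic_form Q" "is_quadratic_form R" "is_hermitian_form S"
    "is_bideg22 T" "is_quadratic_form B1" "is_linear_form B2" "is_linear_form B3"
  shows "poly_z_zbar (quartic_part P Q R S T B1 B2 B3)"
  unfolding quartic_part_def[abs_def]
  by (intro poly_z_zbar_Re poly_z_zbar.add poly_z_zbar.mult poly_z_zbar.cnj poly_z_zbar.zeta
      poly_z_zbar.const poly_z_zbar_power poly_z_zbar_norm_square
      poly_z_zbar_bideg21[OF assms(1)] poly_z_zbar_cubic_form[OF assms(2)]
      poly_z_zbar_quadratic_form[OF assms(3)] poly_z_zbar_hermitian_form[OF assms(4)]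
      poly_z_zbar_bideg22[OF assms(5)] poly_z_zbar_quadratic_form[OF assms(6)]
      poly_z_zbar_linear_form[OF assms(7)] poly_z_zbar_linear_form[OF assms(8)])

lemma scaleR_pt:
  "fst (t *\<^sub>R q) = of_real t * fst q" "fst (snd (t *\<^sub>R q)) = of_real t * fst (snd q)"
  "snd (snd (t *\<^sub>R q)) = of_real t * snd (snd q)"
  by (simp_all add: scaleR_conv_of_real)

lemma homogeneous_hermitian_part: "homogeneous_deg 2 (hermitian_part h)"
  unfolding homogeneous_deg_def hermitian_part_def scaleR_pt by (simp add: algebra_simps power2_eq_square)

lemma homogeneous_cubic_part:
  assumes "is_quadratic_form K" "is_linear_form A1" shows "homogeneous_deg 3 (cubic_part K A1 A2)"
  unfolding homogeneous_deg_def cubic_part_def scaleR_pt complex_add_cnj[symmetric] complex_norm_square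
    quadratic_form_homogeneous[OF assms(1)] linear_form_homogeneous[OF assms(2)]
  by (simp add: algebra_simps power2_eq_square power3_eq_cube)

lemma homogeneous_quartic_part:
  "is_bideg21 P \<Longrightarrow> is_cubic_form Q \<Longrightarrow> is_quadratic_form R \<Longrightarrow> is_hermitian_form S
  \<Longrightarrow> is_bideg22 T \<Longrightarrow> is_quadratic_form B1 \<Longrightarrow> is_linear_form B2 \<Longrightarrow> is_linear_form B3
  \<Longrightarrow> homogeneous_deg 4 (quartic_part P Q R S T B1 B2 B3)"
  unfolding homogeneous_deg_def quartic_part_def scaleR_pt complex_add_cnj[symmetric] complex_norm_square
  by (simp only: quadratic_form_homogeneous linear_form_homogeneous bideg21_homogeneous
      bideg22_homogeneous cubic_form_homogeneous hermitian_form_homogeneous)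
    (simp add: algebra_simps power2_eq_square power3_eq_cube power4_eq_xxxx)

lemma hermitian_part_hessian:
  "dZ 0 (dZb 0 (hermitian_part h)) q = h 0 0" "dZ 0 (dZb 1 (hermitian_part h)) q = h 0 1"
  "dZ 1 (dZb 0 (hermitian_part h)) q = h 1 0" "dZ 1 (dZb 1 (hermitian_part h)) q = h 1 1"
  "dZ 0 (dZb 2 (hermitian_part h)) q = 0" "dZ 1 (dZb 2 (hermitian_part h)) q = 0"
  "dZ 2 (dZb 0 (hermitian_part h)) q = 0" "dZ 2 (dZb 1 (hermitian_part h)) q = 0"
  "dZ 2 (dZb 2 (hermitian_part h)) q = 0"
  unfolding dZ_dZb_poly_z_zbar[OF poly_z_zbar_hermitian_part] unfolding hermitian_part_def[abs_def]
  by (simp_all add: poly_z_zbar.intros ev_def field_simps)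

lemma dZ_dZb_zeta_line:
  assumes "\<And>q. fst q = fst p \<Longrightarrow> fst (snd q) = fst (snd p) \<Longrightarrow> g q = g' q"
  shows "dZ 2 (dZb 2 g) p = dZ 2 (dZb 2 g') p"
proof -
  have Dd_eq: "Dd v g q = Dd v g' q"
    if "\<And>q. fst q = fst p \<Longrightarrow> fst (snd q) = fst (snd p) \<Longrightarrow> g q = g' q"
      "fst v = 0" "fst (snd v) = 0" "fst q = fst p" "fst (snd q) = fst (snd p)" for g g' :: "pt \<Rightarrow> complex" and v q
  proof -
    have "(\<lambda>t::real. g (q + t *\<^sub>R v)) = (\<lambda>t. g' (q + t *\<^sub>R v))"
      using that by (intro ext) simp
    then show ?thesis unfolding Dd_def by simp
  qed
  have "dZb 2 g q = dZb 2 g' q" if "fst q = fst p" "fst (snd q) = fst (snd p)" for q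
    unfolding dZb_def using Dd_eq[OF assms] that by (simp add: ev_def)
  then show ?thesis unfolding dZ_def using Dd_eq[of "dZb 2 g" "dZb 2 g'"] by (simp add: ev_def)
qed

lemma cubic_part_hessian_zeta:
  "dZ 2 (dZb 2 (cubic_part K A1 A2)) p = A1 (fst p) (fst (snd p)) + cnj (A1 (fst p) (fst (snd p)))
     + 2 * A2 * snd (snd p) + 2 * cnj A2 * cnj (snd (snd p))"
proof -
  let ?a = "K (fst p) (fst (snd p))" and ?b = "A1 (fst p) (fst (snd p))"
  let ?g = "\<lambda>q. ?a * cnj (snd (snd q)) + ?b * (snd (snd q) * cnj (snd (snd q)))
      + A2 * (snd (snd q) * snd (snd q) * cnj (snd (snd q)))
      + (cnj ?a * snd (snd q) + cnj ?b * (cnj (snd (snd q)) * snd (snd q))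
      + cnj A2 * (cnj (snd (snd q)) * cnj (snd (snd q)) * snd (snd q)))"
  have "dZ 2 (dZb 2 (cubic_part K A1 A2)) p = dZ 2 (dZb 2 ?g) p"
  proof (rule dZ_dZb_zeta_line)
    fix q :: pt assume "fst q = fst p" "fst (snd q) = fst (snd p)"
    then show "cubic_part K A1 A2 q = ?g q"
      unfolding cubic_part_def complex_add_cnj[symmetric] complex_norm_square
      by (simp add: algebra_simps power2_eq_square)
  qed
  also have "\<dots> = ?b + cnj ?b + 2 * A2 * snd (snd p) + 2 * cnj A2 * cnj (snd (snd p))"
    by (subst dZ_dZb_poly_z_zbar) (simp_all add: poly_z_zbar.intros ev_def field_simps)
  finally show ?thesis .
qed

lemma quartic_part_hessian_zeta:
  "dZ 2 (dZb 2 (quartic_part P Q R S T B1 B2 B3)) p = S (fst p) (fst (snd p))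
     + B1 (fst p) (fst (snd p)) + cnj (B1 (fst p) (fst (snd p)))
     + 2 * B2 (fst p) (fst (snd p)) * snd (snd p) + 2 * cnj (B2 (fst p) (fst (snd p))) * cnj (snd (snd p))
     + 2 * B3 (fst p) (fst (snd p)) * cnj (snd (snd p)) + 2 * cnj (B3 (fst p) (fst (snd p))) * snd (snd p)"
proof -
  let ?P = "P (fst p) (fst (snd p)) + Q (fst p) (fst (snd p))" and ?R = "R (fst p) (fst (snd p))"
    and ?S = "S (fst p) (fst (snd p))" and ?T = "T (fst p) (fst (snd p))"
    and ?B1 = "B1 (fst p) (fst (snd p))" and ?B2 = "B2 (fst p) (fst (snd p))"
    and ?B3 = "B3 (fst p) (fst (snd p))"
  let ?g = "\<lambda>q. ?P * cnj (snd (snd q)) + ?R * (cnj (snd (snd q)) * cnj (snd (snd q)))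
      + (cnj ?P * snd (snd q) + cnj ?R * (snd (snd q) * snd (snd q)))
      + ?S * (snd (snd q) * cnj (snd (snd q))) + ?T
      + (?B1 * (snd (snd q) * cnj (snd (snd q))) + ?B2 * (snd (snd q) * snd (snd q) * cnj (snd (snd q)))
         + ?B3 * (snd (snd q) * (cnj (snd (snd q)) * cnj (snd (snd q))))
         + (cnj ?B1 * (cnj (snd (snd q)) * snd (snd q))
           + cnj ?B2 * (cnj (snd (snd q)) * cnj (snd (snd q)) * snd (snd q))
           + cnj ?B3 * (cnj (snd (snd q)) * (snd (snd q) * snd (snd q)))))"
  have "dZ 2 (dZb 2 (quartic_part P Q R S T B1 B2 B3)) p = dZ 2 (dZb 2 ?g) p"
  proof (rule dZ_dZb_zeta_line)
    fix q :: pt assume "fst q = fst p" "fst (snd q) = fst (snd p)"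
    then show "quartic_part P Q R S T B1 B2 B3 q = ?g q"
      unfolding quartic_part_def complex_add_cnj[symmetric] complex_norm_square
      by (simp add: algebra_simps power2_eq_square)
  qed
  also have "\<dots> = ?S + ?B1 + cnj ?B1 + 2 * ?B2 * snd (snd p) + 2 * cnj ?B2 * cnj (snd (snd p))
     + 2 * ?B3 * cnj (snd (snd p)) + 2 * cnj ?B3 * snd (snd p)"
    by (subst dZ_dZb_poly_z_zbar) (simp_all add: poly_z_zbar.intros ev_def field_simps)
  finally show ?thesis .
qed

lemma cubic_part_quad_form:
  "cubic_part (quad_form a b c) (\<lambda>x y. 0) 0 = (\<lambda>q.
    (a * (fst q * fst q) + b * (fst q * fst (snd q)) + c * (fst (snd q) * fst (snd q))) * cnj (snd (snd q))
    + cnj (a * (fst q * fst q) + b * (fst q * fst (snd q)) + c * (fst (snd q) * fst (snd q))) * snd (snd q))"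
  by (rule ext) (simp only: cubic_part_def complex_add_cnj[symmetric],
      simp add: quad_form_def power2_eq_square algebra_simps)

lemma cubic_part_hessian_mixed:
  "dZ 0 (dZb 2 (cubic_part (quad_form a b c) (\<lambda>x y. 0) 0)) p = 2 * a * fst p + b * fst (snd p)"
  "dZ 1 (dZb 2 (cubic_part (quad_form a b c) (\<lambda>x y. 0) 0)) p = b * fst p + 2 * c * fst (snd p)"
  "dZ 2 (dZb 0 (cubic_part (quad_form a b c) (\<lambda>x y. 0) 0)) p = cnj (2 * a * fst p + b * fst (snd p))"
  "dZ 2 (dZb 1 (cubic_part (quad_form a b c) (\<lambda>x y. 0) 0)) p = cnj (b * fst p + 2 * c * fst (snd p))"
  unfolding cubic_part_quad_form
  by (subst dZ_dZb_poly_z_zbar, simp add: poly_z_zbar.intros, simp add: poly_z_zbar.intros ev_def field_simps)+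

section \<open>Determinants along rays\<close>

definition second_order_expansion :: "(real \<Rightarrow> complex) \<Rightarrow> complex \<Rightarrow> complex \<Rightarrow> complex \<Rightarrow> bool" where
  "second_order_expansion X a b c \<longleftrightarrow>
    (\<exists>D. eventually (\<lambda>t. norm (X t - (a + of_real t * b + of_real t ^ 2 * c)) \<le> D * \<bar>t\<bar> ^ 3) (at 0))"

lemma cubic_remainder_divide_tendsto_0:
  fixes e :: "real \<Rightarrow> complex"
  assumes e: "eventually (\<lambda>t. norm (e t) \<le> D * \<bar>t\<bar>^3) (at 0)" and j: "j \<le> 2"
  shows "((\<lambda>t. e t / of_real t ^ j) \<longlongrightarrow> 0) (at 0)"
proof (rule Lim_null_comparison)
  show "eventually (\<lambda>t. norm (e t / of_real t ^ j) \<le> D * \<bar>t\<bar>^(3-j)) (at 0)"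
    using e eventually_neq_at_within[of 0 0 UNIV]
  proof eventually_elim
    case (elim t)
    have "norm (e t / of_real t ^ j) = norm (e t) / \<bar>t\<bar>^j" by (simp add: norm_divide norm_power)
    also have "\<dots> \<le> D * \<bar>t\<bar>^3 / \<bar>t\<bar>^j" using elim by (simp add: divide_right_mono)
    also have "\<dots> = D * \<bar>t\<bar>^(3-j)" using elim j by (simp add: power_diff)
    finally show ?case .
  qed
  have "((\<lambda>t. D * \<bar>t\<bar>^(3-j)) \<longlongrightarrow> D * \<bar>0::real\<bar>^(3-j)) (at 0)"
    by (intro tendsto_intros)
  then show "((\<lambda>t. D * \<bar>t\<bar>^(3-j)) \<longlongrightarrow> 0) (at 0)" using j by (simp add: power_0_left)
qed

lemma second_order_expansion_tendsto:
  fixes X :: "real \<Rightarrow> complex"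
  assumes "second_order_expansion X a b c"
  shows "(X \<longlongrightarrow> a) (at 0)"
    and "a = 0 \<Longrightarrow> ((\<lambda>t. X t / of_real t) \<longlongrightarrow> b) (at 0)"
    and "a = 0 \<Longrightarrow> b = 0 \<Longrightarrow> ((\<lambda>t. X t / of_real t ^ 2) \<longlongrightarrow> c) (at 0)"
proof -
  define e where "e t = X t - (a + of_real t * b + of_real t ^ 2 * c)" for t
  have X: "X t = a + of_real t * b + of_real t ^ 2 * c + e t" for t by (simp add: e_def)
  obtain D where "eventually (\<lambda>t. norm (e t) \<le> D * \<bar>t\<bar>^3) (at 0)"
    using assms unfolding second_order_expansion_def e_def by blast
  note e = cubic_remainder_divide_tendsto_0[OF this]
  have t0: "((\<lambda>t::real. complex_of_real t) \<longlongrightarrow> 0) (at 0)"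
    using tendsto_of_real[OF tendsto_ident_at[of "0::real" UNIV]] by simp
  have "((\<lambda>t. a + of_real t * b + of_real t^2 * c + e t) \<longlongrightarrow> a + 0 * b + 0^2 * c + 0) (at 0)"
    using e[of 0] by (intro tendsto_intros t0) simp_all
  then show "(X \<longlongrightarrow> a) (at 0)" unfolding X by simp
  have nz: "eventually (\<lambda>t::real. t \<noteq> 0) (at 0)" by (rule eventually_neq_at_within)
  assume a: "a = 0"
  have "((\<lambda>t. b + of_real t * c + e t / of_real t) \<longlongrightarrow> b + 0 * c + 0) (at 0)"
    using e[of 1] by (intro tendsto_intros t0) simp_all
  moreover have "eventually (\<lambda>t. X t / of_real t = b + of_real t * c + e t / of_real t) (at 0)"
    using nz by eventually_elim (simp add: X a field_simps power2_eq_square)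
  ultimately show "((\<lambda>t. X t / of_real t) \<longlongrightarrow> b) (at 0)" by (simp add: tendsto_cong)
  assume b: "b = 0"
  have "((\<lambda>t. c + e t / of_real t ^ 2) \<longlongrightarrow> c + 0) (at 0)"
    using e[of 2] by (intro tendsto_intros) simp_all
  moreover have "eventually (\<lambda>t. X t / of_real t ^ 2 = c + e t / of_real t ^ 2) (at 0)"
    using nz by eventually_elim (simp add: X a b field_simps power2_eq_square)
  ultimately show "((\<lambda>t. X t / of_real t ^ 2) \<longlongrightarrow> c) (at 0)" by (simp add: tendsto_cong)
qed

text \<open>The coefficients of \<open>t\<close> and \<open>t\<^sup>2\<close> in \<open>det X(t)\<close> are recovered as the limits of \<open>det X(t) / t\<close> and
  \<open>det X(t) / t\<^sup>2\<close>, which are continuous expressions in the limits provided by the expansions.\<close>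
lemma det3_expansion_first_order:
  fixes X :: "nat \<Rightarrow> nat \<Rightarrow> real \<Rightarrow> complex"
  assumes det: "eventually (\<lambda>t. det3 (\<lambda>j k. X j k t) = 0) (at 0)"
    and X: "\<And>j k. second_order_expansion (X j k) (M j k) (N j k) (L j k)"
    and M: "M 0 2 = 0" "M 1 2 = 0" "M 2 0 = 0" "M 2 1 = 0" "M 2 2 = 0"
  shows "(M 0 0 * M 1 1 - M 0 1 * M 1 0) * N 2 2 = 0"
proof -
  note lim0 = second_order_expansion_tendsto(1)[OF X]
  note lim1 = second_order_expansion_tendsto(2)[OF X]
  let ?F = "\<lambda>t. X 0 0 t * (X 1 1 t * (X 2 2 t / of_real t) - X 1 2 t * (X 2 1 t / of_real t))
     - X 0 1 t * (X 1 0 t * (X 2 2 t / of_real t) - X 1 2 t * (X 2 0 t / of_real t))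
     + (X 0 2 t / of_real t) * (X 1 0 t * X 2 1 t - X 1 1 t * X 2 0 t)"
  have "eventually (\<lambda>t. ?F t = 0) (at 0)"
    using det eventually_neq_at_within[of 0 0 UNIV]
  proof eventually_elim
    case (elim t)
    have "?F t = det3 (\<lambda>j k. X j k t) / of_real t" unfolding det3_def using elim(2) by (simp add: field_simps)
    then show ?case using elim(1) by simp
  qed
  then have "(?F \<longlongrightarrow> 0) (at 0)" by (rule tendsto_eventually)
  moreover have "(?F \<longlongrightarrow> M 0 0 * (M 1 1 * N 2 2 - M 1 2 * N 2 1) - M 0 1 * (M 1 0 * N 2 2 - M 1 2 * N 2 0)
      + N 0 2 * (M 1 0 * M 2 1 - M 1 1 * M 2 0)) (at 0)"
    by (intro tendsto_add tendsto_diff tendsto_mult lim0 lim1 M)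
  ultimately show ?thesis using M by (auto dest: tendsto_unique[OF at_neq_bot] simp: algebra_simps)
qed

lemma det3_expansion_second_order:
  fixes X :: "nat \<Rightarrow> nat \<Rightarrow> real \<Rightarrow> complex"
  assumes det: "eventually (\<lambda>t. det3 (\<lambda>j k. X j k t) = 0) (at 0)"
    and X: "\<And>j k. second_order_expansion (X j k) (M j k) (N j k) (L j k)"
    and M: "M 0 2 = 0" "M 1 2 = 0" "M 2 0 = 0" "M 2 1 = 0" "M 2 2 = 0" and N: "N 2 2 = 0"
  shows "(M 0 0 * M 1 1 - M 0 1 * M 1 0) * L 2 2 =
    M 0 0 * N 1 2 * N 2 1 - M 0 1 * N 1 2 * N 2 0 - M 1 0 * N 0 2 * N 2 1 + M 1 1 * N 0 2 * N 2 0"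
proof -
  note lim0 = second_order_expansion_tendsto(1)[OF X]
  note lim1 = second_order_expansion_tendsto(2)[OF X]
  note lim2 = second_order_expansion_tendsto(3)[OF X]
  let ?F = "\<lambda>t. X 0 0 t * (X 1 1 t * (X 2 2 t / of_real t ^ 2) - (X 1 2 t / of_real t) * (X 2 1 t / of_real t))
     - X 0 1 t * (X 1 0 t * (X 2 2 t / of_real t ^ 2) - (X 1 2 t / of_real t) * (X 2 0 t / of_real t))
     + (X 0 2 t / of_real t) * (X 1 0 t * (X 2 1 t / of_real t) - X 1 1 t * (X 2 0 t / of_real t))"
  have "eventually (\<lambda>t. ?F t = 0) (at 0)"
    using det eventually_neq_at_within[of 0 0 UNIV]
  proof eventually_elim
    case (elim t)
    have "?F t = det3 (\<lambda>j k. X j k t) / of_real t ^ 2"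
      unfolding det3_def using elim(2) by (simp add: field_simps power2_eq_square)
    then show ?case using elim(1) by simp
  qed
  then have "(?F \<longlongrightarrow> 0) (at 0)" by (rule tendsto_eventually)
  moreover have "(?F \<longlongrightarrow> M 0 0 * (M 1 1 * L 2 2 - N 1 2 * N 2 1) - M 0 1 * (M 1 0 * L 2 2 - N 1 2 * N 2 0)
      + N 0 2 * (M 1 0 * N 2 1 - M 1 1 * N 2 0)) (at 0)"
    by (intro tendsto_add tendsto_diff tendsto_mult lim0 lim1 lim2 M N)
  ultimately show ?thesis by (auto dest: tendsto_unique[OF at_neq_bot] simp: algebra_simps)
qed

section \<open>Identifying the coefficients\<close>

lemma real_linear_eq_const_imp_zero:
  fixes Z C :: complex
  assumes "\<And>w. Z * w + cnj (Z * w) = C"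
  shows "Z = 0"
proof -
  have "Re C = 2 * Re (Z * w)" for w using arg_cong[OF assms[of w], of Re] by simp
  from this[of 1] this[of "-1"] this[of \<i>] this[of "-\<i>"] show ?thesis by (simp add: complex_eq_iff)
qed

lemma linear_forms_add_cnj_eq_0:
  assumes A: "is_linear_form A" and B: "is_linear_form B" and AB: "\<And>x y. A x y + cnj (B x y) = 0"
  shows "(\<forall>x y. A x y = 0) \<and> (\<forall>x y. B x y = 0)"
proof -
  obtain a b where ab: "\<And>x y. A x y = a * x + b * y" using A unfolding is_linear_form_def by blast
  obtain c d where cd: "\<And>x y. B x y = c * x + d * y" using B unfolding is_linear_form_def by blast
  have "a + cnj c = 0" "\<i> * a + cnj (c * \<i>) = 0" "b + cnj d = 0" "\<i> * b + cnj (d * \<i>) = 0"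
    using AB[of 1 0] AB[of \<i> 0] AB[of 0 1] AB[of 0 \<i>] by (simp_all add: ab cd)
  then have "a = 0" "b = 0" "c = 0" "d = 0" by (simp_all add: complex_eq_iff)
  then show ?thesis by (simp add: ab cd)
qed

lemma quadratic_form_Re_eq_0:
  assumes B: "is_quadratic_form B" and Re0: "\<And>x y. Re (B x y) = 0"
  shows "B x y = 0"
proof -
  obtain p q r where pqr: "\<And>x y. B x y = p * x^2 + q * x * y + r * y^2"
    using B unfolding is_quadratic_form_def by blast
  have "Re p = 0" "Im p = 0" "Re r = 0" "Im r = 0"
    using Re0[of 1 0] Re0[of "1 + \<i>" 0] Re0[of 0 1] Re0[of 0 "1 + \<i>"]
    by (simp_all add: pqr power2_eq_square algebra_simps)
  then have pr: "p = 0" "r = 0" by (simp_all add: complex_eq_iff)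
  have "Re q = 0" "Im q = 0" using Re0[of 1 1] Re0[of 1 \<i>] by (simp_all add: pqr pr)
  then show ?thesis by (simp add: pqr pr complex_eq_iff)
qed

lemma quadratic_form_mult_ii:
  assumes "is_quadratic_form B" shows "B (\<i> * x) (\<i> * y) = - B x y"
proof -
  obtain p q r where "\<And>x y. B x y = p * x^2 + q * x * y + r * y^2"
    using assms unfolding is_quadratic_form_def by blast
  then show ?thesis by (simp add: power2_eq_square algebra_simps)
qed

lemma hermitian_form_mult_ii:
  assumes "is_hermitian_form S" shows "S (\<i> * x) (\<i> * y) = S x y"
proof -
  obtain c where c: "\<And>z1 z2. S z1 z2 = (\<Sum>i<2. \<Sum>j<2. c i j * zv z1 z2 i * cnj (zv z1 z2 j))"
    using assms unfolding is_hermitian_form_def by blast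
  show ?thesis unfolding c by (intro sum.cong refl) (simp add: zv_def)
qed

lemma cubic_part_zeta_flat:
  assumes A1: "is_linear_form A1" and flat: "\<And>p. dZ 2 (dZb 2 (cubic_part K A1 A2)) p = 0"
  shows "(\<forall>x y. A1 x y = 0) \<and> A2 = 0"
proof -
  have E: "A1 x y + cnj (A1 x y) + 2 * A2 * w + 2 * cnj A2 * cnj w = 0" for x y w
    using flat[of "(x, y, w)"] unfolding cubic_part_hessian_zeta by simp
  then have "A1 x y + cnj (A1 x y) = 0" for x y using E[of x y 0] by simp
  then have A10: "\<forall>x y. A1 x y = 0" using linear_forms_add_cnj_eq_0[OF A1 A1] by blast
  have "(2 * A2) * w + cnj ((2 * A2) * w) = 0" for w using E[of 0 0 w] A10 by simp
  then have "2 * A2 = 0" by (rule real_linear_eq_const_imp_zero)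
  with A10 show ?thesis by simp
qed

lemma quartic_part_zeta_hessian:
  assumes B1: "is_quadratic_form B1" and B2: "is_linear_form B2" and B3: "is_linear_form B3"
    and S: "is_hermitian_form S" and d: "d \<noteq> 0" and RH: "\<And>x y. RH (\<i> * x) (\<i> * y) = RH x y"
    and E: "\<And>x y w. d * dZ 2 (dZb 2 (quartic_part P Q R S T B1 B2 B3)) (x, y, w) = RH x y"
  shows "(\<forall>x y. B1 x y = 0) \<and> (\<forall>x y. B2 x y = 0) \<and> (\<forall>x y. B3 x y = 0) \<and> (\<forall>x y. d * S x y = RH x y)"
proof -
  let ?Z = "\<lambda>x y. 2 * (B2 x y + cnj (B3 x y))"
  have W: "S x y + (B1 x y + cnj (B1 x y)) + (?Z x y * w + cnj (?Z x y * w)) = RH x y / d" for x y w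
  proof -
    have "d * (S x y + B1 x y + cnj (B1 x y) + 2 * B2 x y * w + 2 * cnj (B2 x y) * cnj w
        + 2 * B3 x y * cnj w + 2 * cnj (B3 x y) * w) = RH x y"
      using E[of x y w] unfolding quartic_part_hessian_zeta by simp
    then have "S x y + B1 x y + cnj (B1 x y) + 2 * B2 x y * w + 2 * cnj (B2 x y) * cnj w
        + 2 * B3 x y * cnj w + 2 * cnj (B3 x y) * w = RH x y / d"
      by (metis d nonzero_mult_div_cancel_left)
    then show ?thesis by (simp add: algebra_simps)
  qed
  have "?Z x y = 0" for x y
  proof (rule real_linear_eq_const_imp_zero)
    show "?Z x y * w + cnj (?Z x y * w) = RH x y / d - (S x y + (B1 x y + cnj (B1 x y)))" for w
      using W[of x y w] by (metis add_diff_cancel_left')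
  qed
  then have "B2 x y + cnj (B3 x y) = 0" for x y by (metis mult_eq_0_iff zero_neq_numeral)
  then have B23: "(\<forall>x y. B2 x y = 0) \<and> (\<forall>x y. B3 x y = 0)"
    by (rule linear_forms_add_cnj_eq_0[OF B2 B3])
  have W0: "S x y + (B1 x y + cnj (B1 x y)) = RH x y / d" for x y using W[of x y 0] by simp
  have "Re (B1 x y) = 0" for x y
  proof -
    have "S x y + (B1 x y + cnj (B1 x y)) = RH x y / d"
      "S x y + - (B1 x y + cnj (B1 x y)) = RH x y / d"
      using W0[of x y] W0[of "\<i> * x" "\<i> * y"]
      unfolding hermitian_form_mult_ii[OF S] quadratic_form_mult_ii[OF B1] RH by simp_all
    then have "B1 x y + cnj (B1 x y) = - (B1 x y + cnj (B1 x y))" by (metis add_left_cancel)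
    then show ?thesis by (simp add: complex_eq_iff)
  qed
  then have B10: "B1 x y = 0" for x y by (rule quadratic_form_Re_eq_0[OF B1])
  have "d * S x y = RH x y" for x y using W0[of x y] B10 d by (simp add: field_simps)
  with B10 B23 show ?thesis by simp
qed

section \<open>Degenerate Levi form of the model\<close>

text \<open>\<open>2 a x + b y\<close> and \<open>b x + 2 c y\<close> are the partial derivatives of \<open>quad_form a b c\<close> at \<open>(x, y)\<close>,
  i.e. the mixed \<open>z\<zeta>\<close>-entries of the Hessian of the cubic part.\<close>
definition levi_cofactor ::
    "(nat \<Rightarrow> nat \<Rightarrow> complex) \<Rightarrow> complex \<Rightarrow> complex \<Rightarrow> complex \<Rightarrow> complex \<Rightarrow> complex \<Rightarrow> complex" where
  "levi_cofactor h a b c x y = h 0 0 * (b * x + 2 * c * y) * cnj (b * x + 2 * c * y)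
     - h 0 1 * (b * x + 2 * c * y) * cnj (2 * a * x + b * y)
     - h 1 0 * (2 * a * x + b * y) * cnj (b * x + 2 * c * y)
     + h 1 1 * (2 * a * x + b * y) * cnj (2 * a * x + b * y)"

lemma levi_cofactor_mult_ii: "levi_cofactor h a b c (\<i> * x) (\<i> * y) = levi_cofactor h a b c x y"
  unfolding levi_cofactor_def by (simp add: algebra_simps)

locale degenerate_levi_model =
  fixes h :: "nat \<Rightarrow> nat \<Rightarrow> complex" and a b c :: complex
    and A1 B1 B2 B3 R P Q S T :: "complex \<Rightarrow> complex \<Rightarrow> complex" and A2 :: complex
    and f Rem :: "pt \<Rightarrow> real" and U :: "pt set"
  assumes A1_lin: "is_linear_form A1"
    and B1_quad: "is_quadratic_form B1" and R_quad: "is_quadratic_form R"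
    and B2_lin: "is_linear_form B2" and B3_lin: "is_linear_form B3"
    and P_form: "is_bideg21 P" and Q_cubic: "is_cubic_form Q"
    and S_herm: "is_hermitian_form S" and T_form: "is_bideg22 T"
    and f_eq: "\<And>q. complex_of_real (f q) = hermitian_part h q + cubic_part (quad_form a b c) A1 A2 q
        + quartic_part P Q R S T B1 B2 B3 q + complex_of_real (Rem q)"
    and det_h: "h 0 0 * h 1 1 - h 0 1 * h 1 0 \<noteq> 0"
    and U_open: "open U" and U_0: "0 \<in> U"
    and Rem_smooth: "C_inf_on U (\<lambda>p. complex_of_real (Rem p))"
    and Rem_small: "\<exists>C. \<forall>p\<in>U. \<bar>Rem p\<bar> \<le> C * norm p ^ 5"
    and levi_degenerate: "\<forall>p\<in>U. levi_det f p = 0"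
begin

abbreviation "F2 \<equiv> hermitian_part h"
abbreviation "F3 \<equiv> cubic_part (quad_form a b c) A1 A2"
abbreviation "F4 \<equiv> quartic_part P Q R S T B1 B2 B3"

lemma poly_z_zbar_parts: "poly_z_zbar F2" "poly_z_zbar F3" "poly_z_zbar F4"
  by (simp_all add: poly_z_zbar_hermitian_part poly_z_zbar_cubic_part[OF is_quadratic_form_quad_form A1_lin]
      poly_z_zbar_quartic_part[OF P_form Q_cubic R_quad S_herm T_form B1_quad B2_lin B3_lin])

lemma homogeneous_parts: "homogeneous_deg 2 F2" "homogeneous_deg 3 F3" "homogeneous_deg 4 F4"
  by (simp_all add: homogeneous_hermitian_part homogeneous_cubic_part[OF is_quadratic_form_quad_form A1_lin]
      homogeneous_quartic_part[OF P_form Q_cubic R_quad S_herm T_form B1_quad B2_lin B3_lin])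

text \<open>Along the ray through \<open>p\<close>, homogeneity turns the Hessians of the three model parts into
  powers of \<open>t\<close>, while the Hessian of the remainder is \<open>O(t\<^sup>3)\<close>.\<close>
lemma cHess_ray_expansion:
  "second_order_expansion (\<lambda>t. cHess f (t *\<^sub>R p) j k)
     (dZ j (dZb k F2) p) (dZ j (dZb k F3) p) (dZ j (dZb k F4) p)"
proof -
  let ?Rc = "\<lambda>p. complex_of_real (Rem p)"
  obtain C0 where "\<forall>p\<in>U. norm (?Rc p) \<le> C0 * norm p ^ 5" using Rem_small by auto
  then obtain C r where r: "0 < r" "cball 0 r \<subseteq> U"
    and C: "\<forall>q\<in>cball 0 r. norm (dZ j (dZb k ?Rc) q) \<le> C * norm q ^ 3"
    using dZ_dZb_cubic_bound[OF Rem_smooth U_open U_0] by blast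
  have "eventually (\<lambda>t. t *\<^sub>R p \<in> ball 0 r) (at (0::real))"
  proof -
    have "((\<lambda>t::real. norm (t *\<^sub>R p)) \<longlongrightarrow> norm ((0::real) *\<^sub>R p)) (at 0)"
      by (intro tendsto_intros)
    then show ?thesis using r by (auto dest: order_tendstoD(2))
  qed
  then have "eventually (\<lambda>t. norm (cHess f (t *\<^sub>R p) j k - (dZ j (dZb k F2) p
      + of_real t * dZ j (dZb k F3) p + of_real t ^ 2 * dZ j (dZb k F4) p)) \<le> (C * norm p ^ 3) * \<bar>t\<bar> ^ 3) (at 0)"
    using eventually_neq_at_within[of 0 0 UNIV]
  proof eventually_elim
    case (elim t)
    then have "t *\<^sub>R p \<in> cball 0 r" by simp
    then have "t *\<^sub>R p \<in> U" and bound: "norm (dZ j (dZb k ?Rc) (t *\<^sub>R p)) \<le> C * norm (t *\<^sub>R p) ^ 3"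
      using r(2) C by blast+
    moreover have "cHess f (t *\<^sub>R p) j k = dZ j (dZb k F2) (t *\<^sub>R p) + dZ j (dZb k F3) (t *\<^sub>R p)
        + dZ j (dZb k F4) (t *\<^sub>R p) + dZ j (dZb k ?Rc) (t *\<^sub>R p)"
      using poly_z_zbar_parts calculation(1)
      by (simp add: cHess_poly_plus_C_inf[OF f_eq _ Rem_smooth U_open] dZ_dZb_add poly_z_zbar.add)
    ultimately show ?case
      using dZ_dZb_homogeneous[OF poly_z_zbar_parts(1) homogeneous_parts(1) _ elim(2)]
        dZ_dZb_homogeneous[OF poly_z_zbar_parts(2) homogeneous_parts(2) _ elim(2)]
        dZ_dZb_homogeneous[OF poly_z_zbar_parts(3) homogeneous_parts(3) _ elim(2)]
      by (simp add: power_mult_distrib mult_ac)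
  qed
  then show ?thesis unfolding second_order_expansion_def by blast
qed

lemma levi_det_along_ray: "eventually (\<lambda>t. det3 (\<lambda>j k. cHess f (t *\<^sub>R p) j k) = 0) (at 0)"
proof -
  have "((\<lambda>t::real. t *\<^sub>R p) \<longlongrightarrow> (0::real) *\<^sub>R p) (at 0)" by (intro tendsto_intros)
  then have "eventually (\<lambda>t. t *\<^sub>R p \<in> U) (at (0::real))"
    using U_open U_0 by (simp add: tendsto_def)
  then show ?thesis using levi_degenerate unfolding levi_det_def by (auto elim: eventually_mono)
qed

lemma cubic_hessian_zeta_vanishes: "dZ 2 (dZb 2 F3) p = 0"
proof -
  have "(h 0 0 * h 1 1 - h 0 1 * h 1 0) * dZ 2 (dZb 2 F3) p = 0"
    using det3_expansion_first_order[OF levi_det_along_ray cHess_ray_expansion hermitian_part_hessian(5-9)]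
    unfolding hermitian_part_hessian(1-4) .
  then show ?thesis using det_h by simp
qed

lemma A1_A2_vanish: "(\<forall>x y. A1 x y = 0) \<and> A2 = 0"
  using cubic_part_zeta_flat[OF A1_lin cubic_hessian_zeta_vanishes] .

lemma quartic_hessian_zeta:
  "(h 0 0 * h 1 1 - h 0 1 * h 1 0) * dZ 2 (dZb 2 F4) (x, y, w) = levi_cofactor h a b c x y"
proof -
  have "A1 = (\<lambda>x y. 0)" using A1_A2_vanish by (simp add: fun_eq_iff)
  then have F3: "F3 = cubic_part (quad_form a b c) (\<lambda>x y. 0) 0" using A1_A2_vanish by simp
  have "(h 0 0 * h 1 1 - h 0 1 * h 1 0) * dZ 2 (dZb 2 F4) (x, y, w) =
      h 0 0 * dZ 1 (dZb 2 F3) (x, y, w) * dZ 2 (dZb 1 F3) (x, y, w)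
    - h 0 1 * dZ 1 (dZb 2 F3) (x, y, w) * dZ 2 (dZb 0 F3) (x, y, w)
    - h 1 0 * dZ 0 (dZb 2 F3) (x, y, w) * dZ 2 (dZb 1 F3) (x, y, w)
    + h 1 1 * dZ 0 (dZb 2 F3) (x, y, w) * dZ 2 (dZb 0 F3) (x, y, w)"
    using det3_expansion_second_order[OF levi_det_along_ray cHess_ray_expansion
        hermitian_part_hessian(5-9) cubic_hessian_zeta_vanishes]
    unfolding hermitian_part_hessian(1-4) .
  then show ?thesis
    unfolding F3 cubic_part_hessian_mixed levi_cofactor_def by (simp add: algebra_simps)
qed

theorem forced_coefficients:
  "(\<forall>x y. A1 x y = 0) \<and> A2 = 0 \<and> (\<forall>x y. B1 x y = 0) \<and> (\<forall>x y. B2 x y = 0) \<and> (\<forall>x y. B3 x y = 0)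
   \<and> (\<forall>x y. (h 0 0 * h 1 1 - h 0 1 * h 1 0) * S x y = levi_cofactor h a b c x y)"
  using A1_A2_vanish quartic_part_zeta_hessian[OF B1_quad B2_lin B3_lin S_herm det_h
      levi_cofactor_mult_ii quartic_hessian_zeta] by blast

end

section \<open>The nine normal forms\<close>

definition nf_levi_matrix :: "nat \<Rightarrow> nat \<Rightarrow> nat \<Rightarrow> complex" where
  "nf_levi_matrix n i j = (if n \<le> 3 then (if i = j then 1 else 0)
     else if n \<le> 6 then (if i = j then (if i = 0 then 1 else -1) else 0)
     else (if i = j then 0 else 1))"

definition nf_K_z1_coeff :: "nat \<Rightarrow> real \<Rightarrow> complex" where
  "nf_K_z1_coeff n k = (if n \<le> 6 then of_real k else 1)"

definition nf_K_z2_coeff :: "nat \<Rightarrow> real \<Rightarrow> complex \<Rightarrow> complex" where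
  "nf_K_z2_coeff n k m = (if n \<in> {1,4,7,8} then m else if n \<in> {2,5} then of_real k else 0)"

lemma nf_herm_eq_hermitian_part:
  assumes "n \<in> {1..9}"
  shows "complex_of_real (nf_herm n (fst q) (fst (snd q))) = hermitian_part (nf_levi_matrix n) q"
proof -
  have n: "n = 1 \<or> n = 2 \<or> n = 3 \<or> n = 4 \<or> n = 5 \<or> n = 6 \<or> n = 7 \<or> n = 8 \<or> n = 9"
    using assms by auto
  have norm_sq: "(complex_of_real (cmod z))^2 = z * cnj z" for z
    using complex_norm_square by simp
  show ?thesis
  proof (cases "n \<ge> 7")
    case True
    then have "nf_herm n (fst q) (fst (snd q)) = 2 * Re (fst q * cnj (fst (snd q)))"
      using n by (auto simp: nf_herm_def)
    moreover have "hermitian_part (nf_levi_matrix n) q = fst q * cnj (fst (snd q)) + fst (snd q) * cnj (fst q)"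
      using True n by (auto simp: hermitian_part_def nf_levi_matrix_def)
    moreover have "complex_of_real (2 * Re (x * cnj y)) = x * cnj y + y * cnj x" for x y
      unfolding complex_add_cnj[symmetric] by (simp add: mult.commute)
    ultimately show ?thesis by simp
  next
    case False
    then show ?thesis
      using n by (elim disjE) (simp_all add: nf_herm_def hermitian_part_def nf_levi_matrix_def norm_sq)
  qed
qed

lemma nf_K_eq_quad_form:
  "n \<in> {1..9} \<Longrightarrow> nf_K n k m = quad_form (nf_K_z1_coeff n k) 0 (nf_K_z2_coeff n k m)"
  unfolding nf_K_def quad_form_def[abs_def] nf_K_z1_coeff_def nf_K_z2_coeff_def
  by (intro ext) (auto simp: algebra_simps)

lemma det_nf_levi_matrix:
  "n \<in> {1..9} \<Longrightarrow> nf_levi_matrix n 0 0 * nf_levi_matrix n 1 1 - nf_levi_matrix n 0 1 * nf_levi_matrix n 1 0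
    = (if n \<le> 3 then 1 else -1)"
  unfolding nf_levi_matrix_def by auto

lemma levi_cofactor_nf:
  assumes "n \<in> {1..9}" "nf_params n k m"
  shows "levi_cofactor (nf_levi_matrix n) (nf_K_z1_coeff n k) 0 (nf_K_z2_coeff n k m) x y
    = (if n \<le> 3 then 1 else -1) * nf_S n k m x y"
proof -
  have n: "n = 1 \<or> n = 2 \<or> n = 3 \<or> n = 4 \<or> n = 5 \<or> n = 6 \<or> n = 7 \<or> n = 8 \<or> n = 9"
    using assms(1) by auto
  have m_real: "n \<in> {1,4,8} \<Longrightarrow> cnj m = m"
    using assms(2) unfolding nf_params_def by (auto simp: Reals_cnj_iff)
  show ?thesis using n unfolding nf_S_def
    by (simp only: of_real_add of_real_diff of_real_mult complex_norm_square, elim disjE;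
        simp add: levi_cofactor_def nf_levi_matrix_def nf_K_z1_coeff_def nf_K_z2_coeff_def m_real
          power2_eq_square algebra_simps)
qed

theorem lemma8:
  fixes n :: nat and k :: real and m :: complex
    and A1 B1 B2 B3 R P Q S T :: "complex \<Rightarrow> complex \<Rightarrow> complex"
    and A2 :: complex
    and f Rem :: "pt \<Rightarrow> real" and U :: "pt set"
  assumes case_n: "n \<in> {1..9}" and params: "nf_params n k m"
    and A1_lin: "is_linear_form A1"
    and B1_quad: "is_quadratic_form B1" and R_quad: "is_quadratic_form R"
    and B2_lin: "is_linear_form B2" and B3_lin: "is_linear_form B3"
    and P_form: "is_bideg21 P" and Q_cubic: "is_cubic_form Q"
    and S_herm: "is_hermitian_form S" and T_form: "is_bideg22 T"
    and f_eq: "\<And>z1 z2 \<zeta>. complex_of_real (f (z1, z2, \<zeta>)) =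
        complex_of_real (nf_herm n z1 z2)
      + complex_of_real (2 * Re (nf_K n k m z1 z2 * cnj \<zeta> + A1 z1 z2 * of_real ((cmod \<zeta>)^2)
                                  + A2 * \<zeta>^2 * cnj \<zeta>))
      + complex_of_real (2 * Re ((P z1 z2 + Q z1 z2) * cnj \<zeta> + R z1 z2 * (cnj \<zeta>)^2))
      + S z1 z2 * of_real ((cmod \<zeta>)^2) + T z1 z2
      + complex_of_real (2 * Re (B1 z1 z2 * of_real ((cmod \<zeta>)^2) + B2 z1 z2 * \<zeta>^2 * cnj \<zeta>
                                  + B3 z1 z2 * \<zeta> * (cnj \<zeta>)^2))
      + complex_of_real (Rem (z1, z2, \<zeta>))"
    and U_open: "open U" and U_0: "0 \<in> U"
    and Rem_smooth: "C_inf_on U (\<lambda>p. complex_of_real (Rem p))"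
    and Rem_small: "\<exists>C. \<forall>p\<in>U. \<bar>Rem p\<bar> \<le> C * norm p ^ 5"
    and levi_degenerate: "\<forall>p\<in>U. levi_det f p = 0"
  shows "(\<forall>z1 z2. A1 z1 z2 = 0) \<and> A2 = 0 \<and> (\<forall>z1 z2. B1 z1 z2 = 0)
       \<and> (\<forall>z1 z2. B2 z1 z2 = 0) \<and> (\<forall>z1 z2. B3 z1 z2 = 0)
       \<and> (\<forall>z1 z2. S z1 z2 = nf_S n k m z1 z2)"
proof -
  let ?h = "nf_levi_matrix n" and ?a = "nf_K_z1_coeff n k" and ?c = "nf_K_z2_coeff n k m"
  have model: "complex_of_real (f q) = hermitian_part ?h q + cubic_part (quad_form ?a 0 ?c) A1 A2 q
      + quartic_part P Q R S T B1 B2 B3 q + complex_of_real (Rem q)" for q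
  proof -
    obtain z1 z2 \<zeta> where q: "q = (z1, z2, \<zeta>)" by (cases q)
    show ?thesis
      using f_eq[of z1 z2 \<zeta>] nf_herm_eq_hermitian_part[OF case_n, of q]
      unfolding q cubic_part_def quartic_part_def nf_K_eq_quad_form[OF case_n, symmetric] by simp
  qed
  have det: "?h 0 0 * ?h 1 1 - ?h 0 1 * ?h 1 0 \<noteq> 0" using det_nf_levi_matrix[OF case_n] by simp
  interpret degenerate_levi_model ?h ?a 0 ?c A1 B1 B2 B3 R P Q S T A2 f Rem U
    by unfold_locales (fact model det assms)+
  have "S x y = nf_S n k m x y" for x y
    using forced_coefficients levi_cofactor_nf[OF case_n params] det_nf_levi_matrix[OF case_n]
    by (auto split: if_split_asm)
  with forced_coefficients show ?thesis by blast
qed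

end
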